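(* Let $\Bbbk$ be a field of characteristic zero, let $n=2m$ be an even integer and $S=\Bbbk[x_1,\ldots,x_n]$. (1) For $d \geq 5$ and $n\geq 4$, let $I = (x_1^d,\dots, x_n^d, x_1^3x_2^{d-3})$. (2) For $d = 4$ and $n\geq 4$, let $I = (x_1^d,\ldots, x_n^d,x_1 x_2 x_3 x_4)$. (3) For $d = 3$ and $n\geq 6$, let $I = (x_1^d,\ldots, x_n^d,x_1 x_2 x_3)$. Then in all cases, $S/I$ fails the WLP in degree $m(d-1) -1$.
   Context: For a monomial ideal $I$, $A=S/I$ fails the WLP in degree $i$ if the multiplication map $\times(x_1+\cdots+x_n): A_i\to A_{i+1}$ is neither injective nor surjective. *)

theory Defs
  imports "HOL-Library.Poly_Mapping"
begin

text \<open>The paper's variable x_(j+1) is rendered as Var j.\<close>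

type_synonym 'k mpoly = "(nat \<Rightarrow>\<^sub>0 nat) \<Rightarrow>\<^sub>0 'k"

definition Var :: "nat \<Rightarrow> ('k::comm_ring_1) mpoly" where
  "Var j = Poly_Mapping.single (Poly_Mapping.single j 1) 1"

definition in_S :: "nat \<Rightarrow> ('k::comm_ring_1) mpoly \<Rightarrow> bool" where
  "in_S n p \<longleftrightarrow> (\<forall>a::nat \<Rightarrow>\<^sub>0 nat. a \<in> Poly_Mapping.keys p \<longrightarrow> Poly_Mapping.keys a \<subseteq> {..<n})"

definition mdeg :: "(nat \<Rightarrow>\<^sub>0 nat) \<Rightarrow> nat" where
  "mdeg a = (\<Sum>j\<in>Poly_Mapping.keys a. Poly_Mapping.lookup a j)"

text \<open>Homogeneous of degree i (the zero polynomial is homogeneous of every degree).\<close>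
definition homog :: "nat \<Rightarrow> ('k::comm_ring_1) mpoly \<Rightarrow> bool" where
  "homog i p \<longleftrightarrow> (\<forall>a::nat \<Rightarrow>\<^sub>0 nat. a \<in> Poly_Mapping.keys p \<longrightarrow> mdeg a = i)"

definition ideal_gen :: "nat \<Rightarrow> ('k::comm_ring_1) mpoly set \<Rightarrow> 'k mpoly set" where
  "ideal_gen n G = {p. \<exists>q. (\<forall>g\<in>G. in_S n (q g)) \<and> p = (\<Sum>g\<in>G. q g * g)}"

definition lin_form :: "nat \<Rightarrow> ('k::comm_ring_1) mpoly" where
  "lin_form n = (\<Sum>j<n. Var j)"

text \<open>Injectivity / surjectivity of x(x_1+...+x_n) : A_i \<rightarrow> A_(i+1), A = S/(G), for
  a homogeneous (here monomial) ideal (G): the class of a form f of degree i is zero in A_i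
  iff f \<in> (G).\<close>
definition mult_injective :: "nat \<Rightarrow> ('k::comm_ring_1) mpoly set \<Rightarrow> nat \<Rightarrow> bool" where
  "mult_injective n G i \<longleftrightarrow>
     (\<forall>f. in_S n f \<and> homog i f \<and> lin_form n * f \<in> ideal_gen n G \<longrightarrow> f \<in> ideal_gen n G)"

definition mult_surjective :: "nat \<Rightarrow> ('k::comm_ring_1) mpoly set \<Rightarrow> nat \<Rightarrow> bool" where
  "mult_surjective n G i \<longleftrightarrow>
     (\<forall>g. in_S n g \<and> homog (Suc i) g \<longrightarrow>
        (\<exists>f. in_S n f \<and> homog i f \<and> g - lin_form n * f \<in> ideal_gen n G))"

definition fails_WLP_in_degree :: "nat \<Rightarrow> ('k::comm_ring_1) mpoly set \<Rightarrow> nat \<Rightarrow> bool" where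
  "fails_WLP_in_degree n G i \<longleftrightarrow> \<not> mult_injective n G i \<and> \<not> mult_surjective n G i"

definition pure_powers :: "nat \<Rightarrow> nat \<Rightarrow> ('k::comm_ring_1) mpoly set" where
  "pure_powers n d = (\<lambda>j. Var j ^ d) ` {..<n}"

end

theory Submission
  imports Defs
begin

text \<open>
  Let L = x_1 + ... + x_n and i = m(d - 1) - 1. Multiplication by L from A_i to A_(i+1) is not
  injective if some form f of degree i with L f in I has a standard monomial (one outside I) in
  its support, and not surjective if some function C on monomials, extended linearly, vanishes
  on I and on L S_i but not on some standard monomial of degree i + 1.

  Both kinds of witnesses multiply when new variables are adjoined: if h is a form in new
  variables annihilated by their sum L' modulo their d-th powers, then L (f h) = h (L f) + f (L' h)
  lies in I again, and likewise for products C C' of functionals on disjoint sets of variables.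
  For a pair of variables x, y one takes h = (y^d - (-x)^d) / (x + y) and the functional
  x^u y^v \<mapsto> (-1)^u on u + v = d - 1; each pair raises the degree by d - 1. So it suffices to
  find witnesses in four variables (six for d = 3). For d \<ge> 5, with a = x_1 + x_2,
  b = x_3 + x_4 and N = 2d - 3, the form f = (a^N - (-b)^N) / (a + b) (x_3 - x_4) works, since
  every form of degree N in x_1, x_2 lies in I and (x_3 + x_4)^N (x_3 - x_4) lies in
  (x_3^d, x_4^d). For d = 4 and d = 3 the functionals are Vandermonde determinants of the
  exponents; the kernel element was found by computer for d = 4, and for d = 3 it is
  (x_1^2 + x_2^2 + x_3^2 - x_1 x_2 - x_1 x_3 - x_2 x_3) times the Vandermonde polynomial of
  x_4, x_5, x_6.
\<close>

abbreviation lookup :: "('a \<Rightarrow>\<^sub>0 'b::zero) \<Rightarrow> 'a \<Rightarrow> 'b" where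
  "lookup \<equiv> Poly_Mapping.lookup"

abbreviation keys :: "('a \<Rightarrow>\<^sub>0 'b::zero) \<Rightarrow> 'a set" where
  "keys \<equiv> Poly_Mapping.keys"

abbreviation single :: "'a \<Rightarrow> 'b \<Rightarrow> ('a \<Rightarrow>\<^sub>0 'b::zero)" where
  "single \<equiv> Poly_Mapping.single"

lemma Var_power: "(Var j :: 'k::comm_ring_1 mpoly) ^ k = single (single j k) 1"
proof (induction k)
  case (Suc k)
  have "(Var j :: 'k mpoly) ^ Suc k = single (single j 1 + single j k) 1"
    by (simp only: power_Suc Suc) (simp add: Var_def mult_single)
  then show ?case
    by (simp add: single_add[symmetric])
qed simp

lemma minus_Var_power:
  "(- Var j :: 'k::comm_ring_1 mpoly) ^ k = single (single j k) ((-1) ^ k)"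
proof (induction k)
  case (Suc k)
  have "(- Var j :: 'k mpoly) ^ Suc k = single (single j 1) (-1) * single (single j k) ((-1) ^ k)"
    by (simp only: power_Suc Suc) (simp add: Var_def single_uminus)
  then show ?case
    by (simp add: mult_single single_add[symmetric])
qed simp

lemma poly_mapping_sum_single: "p = (\<Sum>x\<in>keys p. single x (lookup p x))"
proof (rule poly_mapping_eqI)
  fix k
  have "lookup (\<Sum>x\<in>keys p. single x (lookup p x)) k = (\<Sum>x\<in>keys p. if x = k then lookup p x else 0)"
    by (simp add: lookup_sum lookup_single when_def)
  also have "\<dots> = lookup p k"
    by (simp add: sum.delta in_keys_iff)
  finally show "lookup p k = lookup (\<Sum>x\<in>keys p. single x (lookup p x)) k" ..
qed

lemma mult_eq_sum_single:
  fixes p q :: "'k::comm_ring_1 mpoly"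
  shows "p * q = (\<Sum>x\<in>keys p. \<Sum>y\<in>keys q. single (x + y) (lookup p x * lookup q y))"
  by (subst poly_mapping_sum_single[of p], subst poly_mapping_sum_single[of q])
     (simp add: sum_distrib_left sum_distrib_right mult_single sum.swap[of _ "keys q"])

lemma lookup_mult_single_shift:
  fixes p :: "'k::comm_ring_1 mpoly"
  shows "lookup (p * single e c) (x + e) = lookup p x * c"
proof -
  have "lookup (p * single e c) (x + e) = (\<Sum>y\<in>keys p. if y = x then lookup p y * c else 0)"
    by (subst poly_mapping_sum_single[of p])
       (simp add: sum_distrib_right mult_single lookup_sum lookup_single when_def)
  also have "\<dots> = lookup p x * c"
    by (simp add: sum.delta in_keys_iff)
  finally show ?thesis .
qed

lemma keys_mult_single:
  fixes p :: "'k::comm_ring_1 mpoly"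
  shows "keys (p * single e c) \<subseteq> (\<lambda>x. x + e) ` keys p"
  using keys_mult[of p "single e c"] by (auto split: if_splits)

lemma keys_add_nat_eq: "keys ((a :: nat \<Rightarrow>\<^sub>0 nat) + b) = keys a \<union> keys b"
  by (auto simp: in_keys_iff lookup_add)

lemma mdeg_eq_sum_superset:
  assumes "finite K" "keys a \<subseteq> K"
  shows "mdeg a = (\<Sum>j\<in>K. lookup a j)"
  unfolding mdeg_def
  by (rule sum.mono_neutral_left) (use assms in \<open>auto simp: in_keys_iff\<close>)

lemma mdeg_add: "mdeg (a + b) = mdeg a + mdeg b"
proof -
  let ?K = "keys a \<union> keys b"
  have "mdeg (a + b) = (\<Sum>j\<in>?K. lookup (a + b) j)"
    by (rule mdeg_eq_sum_superset) (auto simp: in_keys_iff lookup_add)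
  also have "\<dots> = (\<Sum>j\<in>?K. lookup a j) + (\<Sum>j\<in>?K. lookup b j)"
    by (simp add: lookup_add sum.distrib)
  also have "\<dots> = mdeg a + mdeg b"
    by (simp add: mdeg_eq_sum_superset[symmetric])
  finally show ?thesis .
qed

lemma mdeg_single [simp]: "mdeg (single j k) = k"
  by (simp add: mdeg_def)

definition vars_in :: "nat set \<Rightarrow> 'k::comm_ring_1 mpoly \<Rightarrow> bool" where
  "vars_in V p \<longleftrightarrow> (\<forall>a\<in>keys p. keys a \<subseteq> V)"

lemma in_S_iff_vars_in: "in_S n p \<longleftrightarrow> vars_in {..<n} p"
  unfolding in_S_def vars_in_def by blast

lemma vars_in_single: "keys a \<subseteq> V \<Longrightarrow> vars_in V (single a c)"
  by (simp add: vars_in_def)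

lemma vars_in_const [simp]:
  "vars_in V 0" "vars_in V 1" "vars_in V (numeral k)" "vars_in V (of_nat m)" "vars_in V (of_int i)"
  by (simp_all add: vars_in_def flip: single_one single_numeral single_of_nat single_of_int)

lemma vars_in_Var: "j \<in> V \<Longrightarrow> vars_in V (Var j)"
  by (simp add: Var_def vars_in_single)

lemma vars_in_add: "vars_in V p \<Longrightarrow> vars_in V q \<Longrightarrow> vars_in V (p + q)"
  unfolding vars_in_def using keys_add[of p q] by blast

lemma vars_in_uminus: "vars_in V p \<Longrightarrow> vars_in V (- p)"
  by (simp add: vars_in_def)

lemma vars_in_diff: "vars_in V p \<Longrightarrow> vars_in V q \<Longrightarrow> vars_in V (p - q)"
  using vars_in_add[of V p "- q"] by (simp add: vars_in_uminus)

lemma vars_in_mult: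
  assumes "vars_in V p" "vars_in V q"
  shows "vars_in V (p * q)"
  unfolding vars_in_def
proof
  fix c assume "c \<in> keys (p * q)"
  then obtain a b where "a \<in> keys p" "b \<in> keys q" "c = a + b"
    using keys_mult[of p q] by blast
  then show "keys c \<subseteq> V"
    using assms keys_add[of a b] unfolding vars_in_def by blast
qed

lemma vars_in_power: "vars_in V p \<Longrightarrow> vars_in V (p ^ k)"
  by (induction k) (auto intro: vars_in_mult)

lemma vars_in_sum: "(\<And>i. i \<in> A \<Longrightarrow> vars_in V (f i)) \<Longrightarrow> vars_in V (sum f A)"
  by (induction A rule: infinite_finite_induct) (auto intro: vars_in_add)

lemma vars_in_mono: "vars_in V p \<Longrightarrow> V \<subseteq> W \<Longrightarrow> vars_in W p"
  unfolding vars_in_def by blast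

lemmas vars_in_intros =
  vars_in_Var vars_in_add vars_in_uminus vars_in_diff vars_in_mult vars_in_power

lemma add_eq_add_disjoint_keys:
  fixes x y a b :: "nat \<Rightarrow>\<^sub>0 nat"
  assumes "keys x \<subseteq> A" "keys a \<subseteq> A" "keys y \<subseteq> B" "keys b \<subseteq> B" "A \<inter> B = {}"
    and "x + y = a + b"
  shows "x = a \<and> y = b"
proof -
  have "lookup x j = lookup a j" for j
  proof (cases "j \<in> A")
    case True
    then have "j \<notin> keys y" "j \<notin> keys b"
      using assms(3-5) by blast+
    then show ?thesis
      using arg_cong[OF assms(6), of "\<lambda>m. lookup m j"] by (simp add: lookup_add in_keys_iff)
  next
    case False
    then have "j \<notin> keys x" "j \<notin> keys a"
      using assms(1,2) by blast+
    then show ?thesis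
      by (simp add: in_keys_iff)
  qed
  then have "x = a"
    by (rule poly_mapping_eqI)
  with assms(6) show ?thesis
    by simp
qed

lemma lookup_mult_disjoint_vars:
  fixes p q :: "'k::comm_ring_1 mpoly"
  assumes "vars_in A p" "vars_in B q" "A \<inter> B = {}" "keys a \<subseteq> A" "keys b \<subseteq> B"
  shows "lookup (p * q) (a + b) = lookup p a * lookup q b"
proof -
  have "lookup (p * q) (a + b)
      = (\<Sum>x\<in>keys p. \<Sum>y\<in>keys q. if x = a \<and> y = b then lookup p x * lookup q y else 0)"
    unfolding mult_eq_sum_single[of p q] lookup_sum lookup_single
  proof (intro sum.cong refl)
    fix x y assume "x \<in> keys p" "y \<in> keys q"
    then have "x + y = a + b \<longleftrightarrow> x = a \<and> y = b"
      using assms add_eq_add_disjoint_keys[of x A a y B b] unfolding vars_in_def by blast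
    then show "(lookup p x * lookup q y when x + y = a + b)
        = (if x = a \<and> y = b then lookup p x * lookup q y else 0)"
      by (simp add: when_def)
  qed
  also have "\<dots> = (\<Sum>x\<in>keys p. if x = a then \<Sum>y\<in>keys q. if y = b then lookup p x * lookup q y else 0 else 0)"
    by (intro sum.cong refl) (simp cong: if_cong)
  also have "\<dots> = lookup p a * lookup q b"
    by (simp add: sum.delta in_keys_iff)
  finally show ?thesis .
qed

lemma homog_zero [simp]: "homog i 0"
  by (simp add: homog_def)

lemma homog_single: "mdeg a = i \<Longrightarrow> homog i (single a c)"
  by (simp add: homog_def)

lemma homog_one: "homog 0 1"
  by (simp add: homog_def mdeg_def flip: single_one)

lemma homog_Var: "homog 1 (Var j)"
  by (simp add: Var_def homog_single)

lemma homog_add: "homog i p \<Longrightarrow> homog i q \<Longrightarrow> homog i (p + q)"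
  unfolding homog_def using keys_add[of p q] by blast

lemma homog_uminus: "homog i p \<Longrightarrow> homog i (- p)"
  by (simp add: homog_def)

lemma homog_diff: "homog i p \<Longrightarrow> homog i q \<Longrightarrow> homog i (p - q)"
  using homog_add[of i p "- q"] by (simp add: homog_uminus)

lemma homog_mult: "homog i p \<Longrightarrow> homog j q \<Longrightarrow> k = i + j \<Longrightarrow> homog k (p * q)"
  unfolding homog_def using keys_mult[of p q] by (force simp: mdeg_add)

lemma homog_power: "homog 1 p \<Longrightarrow> homog k (p ^ k)"
  by (induction k) (auto simp: homog_one intro: homog_mult)

lemma homog_sum: "(\<And>x. x \<in> A \<Longrightarrow> homog i (f x)) \<Longrightarrow> homog i (sum f A)"
  by (induction A rule: infinite_finite_induct) (auto intro: homog_add)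

lemma ideal_genI:
  "(\<And>g. g \<in> G \<Longrightarrow> in_S n (q g)) \<Longrightarrow> p = (\<Sum>g\<in>G. q g * g) \<Longrightarrow> p \<in> ideal_gen n G"
  unfolding ideal_gen_def by blast

lemma zero_in_ideal_gen: "(0::'k::comm_ring_1 mpoly) \<in> ideal_gen n G"
  by (rule ideal_genI[of G n "\<lambda>_. 0"]) (simp_all add: in_S_iff_vars_in)

lemma ideal_gen_add:
  fixes p p' :: "'k::comm_ring_1 mpoly"
  assumes "p \<in> ideal_gen n G" "p' \<in> ideal_gen n G"
  shows "p + p' \<in> ideal_gen n G"
proof -
  obtain q q' where q: "\<forall>g\<in>G. in_S n (q g)" "p = (\<Sum>g\<in>G. q g * g)"
    and q': "\<forall>g\<in>G. in_S n (q' g)" "p' = (\<Sum>g\<in>G. q' g * g)"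
    using assms unfolding ideal_gen_def by blast
  show ?thesis
    by (rule ideal_genI[of G n "\<lambda>g. q g + q' g"])
       (use q q' in \<open>auto simp: in_S_iff_vars_in sum.distrib distrib_right intro: vars_in_add\<close>)
qed

lemma ideal_gen_mult:
  fixes p r :: "'k::comm_ring_1 mpoly"
  assumes "p \<in> ideal_gen n G" "in_S n r"
  shows "r * p \<in> ideal_gen n G"
proof -
  obtain q where q: "\<forall>g\<in>G. in_S n (q g)" "p = (\<Sum>g\<in>G. q g * g)"
    using assms(1) unfolding ideal_gen_def by blast
  show ?thesis
    by (rule ideal_genI[of G n "\<lambda>g. r * q g"])
       (use q assms(2) in \<open>auto simp: in_S_iff_vars_in sum_distrib_left mult.assoc intro: vars_in_mult\<close>)
qed

lemma ideal_gen_diff: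
  fixes p p' :: "'k::comm_ring_1 mpoly"
  assumes "p \<in> ideal_gen n G" "p' \<in> ideal_gen n G"
  shows "p - p' \<in> ideal_gen n G"
  using ideal_gen_add[OF assms(1) ideal_gen_mult[OF assms(2), of "-1"]]
  by (simp add: in_S_iff_vars_in vars_in_uminus)

lemma ideal_gen_sum:
  fixes f :: "_ \<Rightarrow> 'k::comm_ring_1 mpoly"
  shows "(\<And>i. i \<in> A \<Longrightarrow> f i \<in> ideal_gen n G) \<Longrightarrow> sum f A \<in> ideal_gen n G"
  by (induction A rule: infinite_finite_induct) (auto intro: ideal_gen_add zero_in_ideal_gen)

lemma generator_multiple_in_ideal_gen:
  fixes g r :: "'k::comm_ring_1 mpoly"
  assumes "finite G" "g \<in> G" "in_S n r"
  shows "r * g \<in> ideal_gen n G"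
proof (rule ideal_genI[of G n "\<lambda>h. if h = g then r else 0"])
  show "r * g = (\<Sum>h\<in>G. (if h = g then r else 0) * h)"
    using assms(1,2) by (simp add: if_distrib[of "\<lambda>c. c * _"] sum.delta cong: if_cong)
qed (use assms(3) in \<open>simp add: in_S_iff_vars_in\<close>)

lemma generator_in_ideal_gen:
  fixes g :: "'k::comm_ring_1 mpoly"
  assumes "finite G" "g \<in> G"
  shows "g \<in> ideal_gen n G"
  using generator_multiple_in_ideal_gen[OF assms, of n 1] by (simp add: in_S_iff_vars_in)

lemma ideal_gen_mono:
  fixes G :: "'k::comm_ring_1 mpoly set"
  assumes "finite G'" "G \<subseteq> G'" "n \<le> n'"
  shows "ideal_gen n G \<subseteq> ideal_gen n' G'"
proof
  fix p assume "p \<in> ideal_gen n G"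
  then obtain q where q: "\<forall>g\<in>G. in_S n (q g)" "p = (\<Sum>g\<in>G. q g * g)"
    unfolding ideal_gen_def by blast
  show "p \<in> ideal_gen n' G'"
  proof (rule ideal_genI[of G' n' "\<lambda>g. if g \<in> G then q g else 0"])
    show "in_S n' (if g \<in> G then q g else 0)" for g
      using q(1) assms(3) by (auto simp: in_S_iff_vars_in elim: vars_in_mono)
    have "(\<Sum>g\<in>G'. (if g \<in> G then q g else 0) * g) = (\<Sum>g\<in>G. q g * g)"
      by (rule sum.mono_neutral_cong_right) (use assms in auto)
    then show "p = (\<Sum>g\<in>G'. (if g \<in> G then q g else 0) * g)"
      using q(2) by simp
  qed
qed

lemma keys_ideal_gen:
  fixes p :: "'k::comm_ring_1 mpoly"
  assumes "p \<in> ideal_gen n G" "a \<in> keys p"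
  shows "\<exists>g\<in>G. \<exists>q. a \<in> keys (q * g)"
proof -
  obtain q where "p = (\<Sum>g\<in>G. q g * g)"
    using assms(1) unfolding ideal_gen_def by blast
  then show ?thesis
    using assms(2) keys_sum[of "\<lambda>g. q g * g" G] by blast
qed

definition powers_and_monomial :: "nat \<Rightarrow> nat \<Rightarrow> (nat \<Rightarrow>\<^sub>0 nat) \<Rightarrow> 'k::comm_ring_1 mpoly set" where
  "powers_and_monomial n d e = insert (single e 1) (pure_powers n d)"

lemma finite_powers_and_monomial: "finite (powers_and_monomial n d e)"
  by (simp add: powers_and_monomial_def pure_powers_def)

lemma powers_subset_powers_and_monomial:
  "V \<subseteq> {..<n} \<Longrightarrow> (\<lambda>j. Var j ^ d) ` V \<subseteq> powers_and_monomial n d e"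
  by (auto simp: powers_and_monomial_def pure_powers_def)

lemma ideal_gen_powers_and_monomial_mono:
  "n \<le> n' \<Longrightarrow> ideal_gen n (powers_and_monomial n d e :: 'k::comm_ring_1 mpoly set)
     \<subseteq> ideal_gen n' (powers_and_monomial n' d e)"
  by (intro ideal_gen_mono finite_powers_and_monomial)
     (auto simp: powers_and_monomial_def pure_powers_def)

lemma Var_power_multiple_in_ideal:
  assumes "j < n" "d \<le> k" "in_S n c"
  shows "c * Var j ^ k \<in> ideal_gen n (powers_and_monomial n d e :: 'k::comm_ring_1 mpoly set)"
proof -
  have "c * Var j ^ k = (c * Var j ^ (k - d)) * Var j ^ d"
    using assms(2) by (simp add: mult.assoc flip: power_add)
  also have "\<dots> \<in> ideal_gen n (powers_and_monomial n d e)"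
    using assms powers_subset_powers_and_monomial[of "{j}" n d e]
    by (intro generator_multiple_in_ideal_gen finite_powers_and_monomial)
       (auto simp: in_S_iff_vars_in intro!: vars_in_intros)
  finally show ?thesis .
qed

lemma Var_power_in_ideal:
  "j < n \<Longrightarrow> d \<le> k \<Longrightarrow> Var j ^ k \<in> ideal_gen n (powers_and_monomial n d e :: 'k::comm_ring_1 mpoly set)"
  using Var_power_multiple_in_ideal[of j n d k 1 e] by (simp add: in_S_iff_vars_in)

lemma monomial_multiple_in_ideal:
  "in_S n c \<Longrightarrow> c * single e 1 \<in> ideal_gen n (powers_and_monomial n d e :: 'k::comm_ring_1 mpoly set)"
  by (rule generator_multiple_in_ideal_gen[OF finite_powers_and_monomial])
     (simp_all add: powers_and_monomial_def)

definition standard_monomial :: "nat \<Rightarrow> nat \<Rightarrow> (nat \<Rightarrow>\<^sub>0 nat) \<Rightarrow> (nat \<Rightarrow>\<^sub>0 nat) \<Rightarrow> bool" where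
  "standard_monomial n d e a \<longleftrightarrow> (\<forall>j<n. lookup a j < d) \<and> \<not> (\<forall>j. lookup e j \<le> lookup a j)"

lemma not_in_ideal_if_standard_coeff:
  fixes f :: "'k::comm_ring_1 mpoly"
  assumes "lookup f a \<noteq> 0" "standard_monomial n d e a"
  shows "f \<notin> ideal_gen n (powers_and_monomial n d e)"
proof
  assume "f \<in> ideal_gen n (powers_and_monomial n d e)"
  moreover have "a \<in> keys f"
    using assms(1) by (simp add: in_keys_iff)
  ultimately obtain g and q :: "'k mpoly" where g: "g \<in> powers_and_monomial n d e" "a \<in> keys (q * g)"
    using keys_ideal_gen by blast
  from g(1) obtain e' where e': "g = single e' 1" "e' = e \<or> (\<exists>j<n. e' = single j d)"
    unfolding powers_and_monomial_def pure_powers_def by (auto simp: Var_power)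
  from g(2) e'(1) obtain x where "a = x + e'"
    using keys_mult_single[of q e' 1] by auto
  then have le: "lookup e' j \<le> lookup a j" for j
    by (simp add: lookup_add)
  from e'(2) le assms(2) show False
    unfolding standard_monomial_def by (metis lookup_single_eq not_le)
qed

section \<open>Elements of the kernel\<close>

definition kernel_witness ::
    "nat \<Rightarrow> nat \<Rightarrow> (nat \<Rightarrow>\<^sub>0 nat) \<Rightarrow> nat \<Rightarrow> 'k::comm_ring_1 mpoly \<Rightarrow> (nat \<Rightarrow>\<^sub>0 nat) \<Rightarrow> bool" where
  "kernel_witness n d e i f a \<longleftrightarrow> in_S n f \<and> homog i f
     \<and> lin_form n * f \<in> ideal_gen n (powers_and_monomial n d e)
     \<and> lookup f a \<noteq> 0 \<and> standard_monomial n d e a"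

lemma not_mult_injective_if_kernel_witness:
  fixes f :: "'k::comm_ring_1 mpoly"
  assumes "kernel_witness n d e i f a"
  shows "\<not> mult_injective n (powers_and_monomial n d e :: 'k mpoly set) i"
proof
  assume "mult_injective n (powers_and_monomial n d e :: 'k mpoly set) i"
  with assms have "f \<in> ideal_gen n (powers_and_monomial n d e)"
    unfolding kernel_witness_def mult_injective_def by blast
  with assms show False
    unfolding kernel_witness_def using not_in_ideal_if_standard_coeff by blast
qed

definition kernel_block :: "nat \<Rightarrow> nat \<Rightarrow> nat \<Rightarrow> nat \<Rightarrow> 'k::comm_ring_1 mpoly \<Rightarrow> (nat \<Rightarrow>\<^sub>0 nat) \<Rightarrow> bool" where
  "kernel_block n k d D h b \<longleftrightarrow> vars_in {n..<n + k} h \<and> homog D h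
     \<and> (\<Sum>j=n..<n + k. Var j) * h \<in> ideal_gen (n + k) ((\<lambda>j. Var j ^ d) ` {n..<n + k})
     \<and> lookup h b \<noteq> 0 \<and> (\<forall>j\<in>{n..<n + k}. lookup b j < d)"

lemma lin_form_add: "lin_form (n + k) = lin_form n + (\<Sum>j=n..<n + k. Var j)"
  unfolding lin_form_def by (simp add: atLeast0LessThan[symmetric] sum.atLeastLessThan_concat)

lemma standard_monomial_add:
  assumes "standard_monomial n d e a" "keys e \<subseteq> {..<n}" "keys a \<subseteq> {..<n}"
    and "keys b \<subseteq> {n..<n + k}" "\<forall>j\<in>{n..<n + k}. lookup b j < d"
  shows "standard_monomial (n + k) d e (a + b)"
proof -
  have outside: "lookup a j = 0" "lookup e j = 0" if "n \<le> j" for j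
    using assms(2,3) that by (auto simp: in_keys_iff)
  have inside: "lookup b j = 0" if "j < n" for j
    using assms(4) that by (auto simp: in_keys_iff)
  have "lookup (a + b) j < d" if "j < n + k" for j
    using assms(1,5) outside inside that
    by (cases "j < n") (auto simp: standard_monomial_def lookup_add)
  moreover have "\<not> (\<forall>j. lookup e j \<le> lookup (a + b) j)"
  proof
    assume e_le: "\<forall>j. lookup e j \<le> lookup (a + b) j"
    have "lookup e j \<le> lookup a j" for j
      using e_le[rule_format, of j] outside inside by (cases "j < n") (auto simp: lookup_add)
    then show False
      using assms(1) by (simp add: standard_monomial_def)
  qed
  ultimately show ?thesis
    by (simp add: standard_monomial_def)
qed

lemma kernel_witness_tensor:
  fixes f h :: "'k::idom mpoly"
  assumes f: "kernel_witness n d e i f a" and h: "kernel_block n k d D h b"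
    and e: "keys e \<subseteq> {..<n}"
  shows "kernel_witness (n + k) d e (i + D) (f * h) (a + b)"
proof -
  let ?I = "ideal_gen (n + k) (powers_and_monomial (n + k) d e) :: 'k mpoly set"
  have f_vars: "vars_in {..<n} f" and h_vars: "vars_in {n..<n + k} h"
    using f h by (simp_all add: kernel_witness_def kernel_block_def in_S_iff_vars_in)
  then have f_S: "in_S (n + k) f" and h_S: "in_S (n + k) h"
    by (auto simp: in_S_iff_vars_in elim: vars_in_mono)
  have keys_a: "keys a \<subseteq> {..<n}" and keys_b: "keys b \<subseteq> {n..<n + k}"
    using f h f_vars h_vars by (auto simp: kernel_witness_def kernel_block_def vars_in_def in_keys_iff)
  have "lin_form n * f \<in> ?I"
    using f ideal_gen_powers_and_monomial_mono[of n "n + k" d e] by (auto simp: kernel_witness_def)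
  moreover have "(\<Sum>j=n..<n + k. Var j) * h \<in> ?I"
  proof -
    have "ideal_gen (n + k) ((\<lambda>j. Var j ^ d) ` {n..<n + k}) \<subseteq> ?I"
      by (intro ideal_gen_mono finite_powers_and_monomial powers_subset_powers_and_monomial) auto
    then show ?thesis
      using h by (auto simp: kernel_block_def)
  qed
  moreover have "lin_form (n + k) * (f * h) = h * (lin_form n * f) + f * ((\<Sum>j=n..<n + k. Var j) * h)"
    unfolding lin_form_add by (simp add: algebra_simps)
  ultimately have "lin_form (n + k) * (f * h) \<in> ?I"
    using f_S h_S by (simp add: ideal_gen_add ideal_gen_mult)
  moreover have "lookup (f * h) (a + b) \<noteq> 0"
  proof -
    have "lookup (f * h) (a + b) = lookup f a * lookup h b"
      by (rule lookup_mult_disjoint_vars[OF f_vars h_vars _ keys_a keys_b]) auto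
    then show ?thesis
      using f h by (simp add: kernel_witness_def kernel_block_def)
  qed
  moreover have "standard_monomial (n + k) d e (a + b)"
    using f h e keys_a keys_b by (intro standard_monomial_add) (simp_all add: kernel_witness_def kernel_block_def)
  moreover have "homog (i + D) (f * h)"
    using f h by (intro homog_mult) (auto simp: kernel_witness_def kernel_block_def)
  moreover have "in_S (n + k) (f * h)"
    using f_S h_S by (simp add: in_S_iff_vars_in vars_in_mult)
  ultimately show ?thesis
    by (simp add: kernel_witness_def)
qed

definition pair_quotient :: "nat \<Rightarrow> nat \<Rightarrow> 'k::comm_ring_1 mpoly" where
  "pair_quotient d n = (\<Sum>i<d. (- Var n) ^ (d - Suc i) * Var (Suc n) ^ i)"

lemma pair_quotient_eq_sum_single:
  "pair_quotient d n
     = (\<Sum>i<d. single (single n (d - Suc i) + single (Suc n) i) ((-1) ^ (d - Suc i)) :: 'k::comm_ring_1 mpoly)"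
  unfolding pair_quotient_def by (simp add: minus_Var_power Var_power mult_single)

lemma vars_in_pair_quotient: "vars_in {n..<n + 2} (pair_quotient d n :: 'k::comm_ring_1 mpoly)"
  unfolding pair_quotient_def
  by (intro vars_in_sum vars_in_mult vars_in_power vars_in_uminus vars_in_Var) auto

lemma homog_pair_quotient: "homog (d - 1) (pair_quotient d n :: 'k::comm_ring_1 mpoly)"
  unfolding pair_quotient_def
proof (rule homog_sum)
  fix i assume "i \<in> {..<d}"
  have "homog (d - Suc i) ((- Var n) ^ (d - Suc i) :: 'k mpoly)"
    by (rule homog_power[OF homog_uminus[OF homog_Var]])
  moreover have "homog i (Var (Suc n) ^ i :: 'k mpoly)"
    by (rule homog_power[OF homog_Var])
  ultimately show "homog (d - 1) ((- Var n) ^ (d - Suc i) * Var (Suc n) ^ i :: 'k mpoly)"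
    by (rule homog_mult) (use \<open>i \<in> {..<d}\<close> in simp)
qed

lemma pair_quotient_identity:
  "(Var (Suc n) + Var n) * pair_quotient d n = Var (Suc n) ^ d - (- Var n :: 'k::comm_ring_1 mpoly) ^ d"
  unfolding pair_quotient_def using power_diff_sumr2[of "Var (Suc n) :: 'k mpoly" d "- Var n"] by simp

lemma lookup_pair_quotient:
  assumes "1 \<le> d"
  shows "lookup (pair_quotient d n :: 'k::comm_ring_1 mpoly) (single (Suc n) (d - 1)) = 1"
proof -
  have exps: "single n (d - Suc i) + single (Suc n) i = single (Suc n) (d - 1) \<longleftrightarrow> i = d - 1"
    if "i < d" for i
  proof
    assume "single n (d - Suc i) + single (Suc n) i = single (Suc n) (d - 1)"
    from arg_cong[OF this, of "\<lambda>x. lookup x (Suc n)"] show "i = d - 1"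
      by (simp add: lookup_add lookup_single)
  qed (use that in simp)
  have "lookup (pair_quotient d n :: 'k mpoly) (single (Suc n) (d - 1))
      = (\<Sum>i<d. if i = d - 1 then (-1) ^ (d - Suc i) else 0)"
    unfolding pair_quotient_eq_sum_single lookup_sum lookup_single
  proof (intro sum.cong refl)
    fix i assume "i \<in> {..<d}"
    then show "((-1) ^ (d - Suc i) when single n (d - Suc i) + single (Suc n) i = single (Suc n) (d - 1))
        = (if i = d - 1 then (-1) ^ (d - Suc i) else (0::'k))"
      using exps[of i] by (simp add: when_def)
  qed
  then show ?thesis
    using assms by simp
qed

lemma kernel_block_pair_quotient:
  assumes "1 \<le> d"
  shows "kernel_block n 2 d (d - 1) (pair_quotient d n :: 'k::comm_ring_1 mpoly) (single (Suc n) (d - 1))"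
proof -
  have "(\<Sum>j=n..<n + 2. Var j) = (Var n + Var (Suc n) :: 'k mpoly)"
    by (simp add: numeral_2_eq_2)
  then have eq: "(\<Sum>j=n..<n + 2. Var j) * pair_quotient d n = Var (Suc n) ^ d - (-1) ^ d * (Var n ^ d :: 'k mpoly)"
    using pair_quotient_identity[of n d] by (simp only: add.commute power_minus[of "Var n"])
  have "Var (Suc n) ^ d - (-1) ^ d * Var n ^ d \<in> ideal_gen (n + 2) ((\<lambda>j. Var j ^ d) ` {n..<n + 2})"
  proof (rule ideal_gen_diff)
    show "Var (Suc n) ^ d \<in> ideal_gen (n + 2) ((\<lambda>j. Var j ^ d) ` {n..<n + 2})"
      by (rule generator_in_ideal_gen) auto
    show "(-1) ^ d * Var n ^ d \<in> ideal_gen (n + 2) ((\<lambda>j. Var j ^ d) ` {n..<n + 2})"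
      using vars_in_power[OF vars_in_uminus[OF vars_in_const(2)], of "{..<n + 2}" d]
      by (intro generator_multiple_in_ideal_gen) (auto simp: in_S_iff_vars_in)
  qed
  moreover have "lookup (pair_quotient d n :: 'k mpoly) (single (Suc n) (d - 1)) = 1"
    by (rule lookup_pair_quotient[OF assms])
  moreover have "\<forall>j\<in>{n..<n + 2}. lookup (single (Suc n) (d - 1)) j < d"
    using assms by (auto simp: lookup_single when_def)
  ultimately show ?thesis
    unfolding kernel_block_def eq using vars_in_pair_quotient homog_pair_quotient by auto
qed

lemma kernel_witness_add_pairs:
  fixes f :: "'k::idom mpoly"
  assumes "kernel_witness n d e i f a" "keys e \<subseteq> {..<n}" "1 \<le> d"
  shows "\<exists>f' a'. kernel_witness (n + 2 * k) d e (i + k * (d - 1)) (f' :: 'k mpoly) a'"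
proof (induction k)
  case (Suc k)
  then obtain f' a' where "kernel_witness (n + 2 * k) d e (i + k * (d - 1)) (f' :: 'k mpoly) a'"
    by blast
  moreover have "keys e \<subseteq> {..<n + 2 * k}"
    using assms(2) by auto
  ultimately have "kernel_witness (n + 2 * k + 2) d e (i + k * (d - 1) + (d - 1))
      (f' * pair_quotient d (n + 2 * k)) (a' + single (Suc (n + 2 * k)) (d - 1))"
    using kernel_witness_tensor kernel_block_pair_quotient[OF assms(3)] by blast
  moreover have "n + 2 * k + 2 = n + 2 * Suc k" "i + k * (d - 1) + (d - 1) = i + Suc k * (d - 1)"
    by simp_all
  ultimately show ?case
    by metis
qed (use assms(1) in auto)

section \<open>Functionals vanishing on the image\<close>

definition pairing :: "((nat \<Rightarrow>\<^sub>0 nat) \<Rightarrow> 'k) \<Rightarrow> 'k::comm_ring_1 mpoly \<Rightarrow> 'k" where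
  "pairing C p = (\<Sum>a\<in>keys p. C a * lookup p a)"

lemma pairing_eq_sum_superset:
  assumes "finite K" "keys p \<subseteq> K"
  shows "pairing C p = (\<Sum>a\<in>K. C a * lookup p a)"
  unfolding pairing_def by (rule sum.mono_neutral_left) (use assms in \<open>auto simp: in_keys_iff\<close>)

lemma pairing_add: "pairing C (p + q) = pairing C p + pairing C q"
proof -
  let ?K = "keys p \<union> keys q"
  have "pairing C (p + q) = (\<Sum>a\<in>?K. C a * lookup (p + q) a)"
    by (rule pairing_eq_sum_superset) (use keys_add[of p q] in auto)
  also have "\<dots> = (\<Sum>a\<in>?K. C a * lookup p a) + (\<Sum>a\<in>?K. C a * lookup q a)"
    by (simp add: lookup_add distrib_left sum.distrib)
  also have "\<dots> = pairing C p + pairing C q"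
    using pairing_eq_sum_superset[of ?K p C] pairing_eq_sum_superset[of ?K q C] by simp
  finally show ?thesis .
qed

lemma pairing_zero [simp]: "pairing C 0 = 0"
  by (simp add: pairing_def)

lemma pairing_diff: "pairing C (p - q) = pairing C p - pairing C q"
  using pairing_add[of C p "- q"] by (simp add: pairing_def sum_negf)

lemma pairing_sum: "pairing C (sum f A) = (\<Sum>i\<in>A. pairing C (f i))"
  by (induction A rule: infinite_finite_induct) (simp_all add: pairing_add)

lemma pairing_mult_single:
  fixes q :: "'k::comm_ring_1 mpoly"
  shows "pairing C (q * single e 1) = (\<Sum>x\<in>keys q. C (x + e) * lookup q x)"
proof -
  have "pairing C (q * single e 1) = (\<Sum>a\<in>(\<lambda>x. x + e) ` keys q. C a * lookup (q * single e 1) a)"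
    by (rule pairing_eq_sum_superset) (auto intro: keys_mult_single[THEN subsetD])
  also have "\<dots> = (\<Sum>x\<in>keys q. C (x + e) * lookup q x)"
    by (simp add: sum.reindex inj_on_def lookup_mult_single_shift)
  finally show ?thesis .
qed

lemma pairing_ideal_gen_eq_0:
  fixes p :: "'k::comm_ring_1 mpoly"
  assumes "p \<in> ideal_gen n G"
    and "\<And>g. g \<in> G \<Longrightarrow> \<exists>e. g = single e 1 \<and> (\<forall>x. C (x + e) = 0)"
  shows "pairing C p = 0"
proof -
  obtain q where q: "p = (\<Sum>g\<in>G. q g * g)"
    using assms(1) unfolding ideal_gen_def by blast
  have "pairing C (q g * g) = 0" if "g \<in> G" for g
    using assms(2)[OF that] by (auto simp: pairing_mult_single)
  then show ?thesis
    by (simp add: q pairing_sum)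
qed

lemma pairing_lin_form_mult_eq_0:
  fixes f :: "'k::comm_ring_1 mpoly"
  assumes "\<And>x. (\<Sum>j<n. C (x + single j 1)) = 0"
  shows "pairing C (lin_form n * f) = 0"
proof -
  have "lin_form n * f = (\<Sum>j<n. f * single (single j 1) 1)"
    by (simp add: lin_form_def Var_def sum_distrib_left mult.commute)
  then have "pairing C (lin_form n * f) = (\<Sum>j<n. \<Sum>x\<in>keys f. C (x + single j 1) * lookup f x)"
    by (simp add: pairing_sum pairing_mult_single)
  also have "\<dots> = (\<Sum>x\<in>keys f. (\<Sum>j<n. C (x + single j 1)) * lookup f x)"
    by (subst sum.swap) (simp add: sum_distrib_right)
  also have "\<dots> = 0"
    by (simp only: assms mult_zero_left sum.neutral_const)
  finally show ?thesis .
qed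

definition depends_only_on :: "nat set \<Rightarrow> ((nat \<Rightarrow>\<^sub>0 nat) \<Rightarrow> 'a) \<Rightarrow> bool" where
  "depends_only_on V C \<longleftrightarrow> (\<forall>x y. (\<forall>j\<in>V. lookup x j = lookup y j) \<longrightarrow> C x = C y)"

lemma depends_only_on_add_single:
  "depends_only_on V C \<Longrightarrow> j \<notin> V \<Longrightarrow> C (x + single j c) = C x"
  unfolding depends_only_on_def by (metis add.right_neutral lookup_add lookup_single_not_eq)

text \<open>Read as the linear functional \<open>pairing C\<close>, a cokernel block kills the multiples of
  the sum of the variables in V and of their d-th powers.\<close>

definition cokernel_block ::
    "nat set \<Rightarrow> nat \<Rightarrow> nat \<Rightarrow> ((nat \<Rightarrow>\<^sub>0 nat) \<Rightarrow> 'k::comm_ring_1) \<Rightarrow> (nat \<Rightarrow>\<^sub>0 nat) \<Rightarrow> bool" where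
  "cokernel_block V d D C a \<longleftrightarrow> depends_only_on V C
     \<and> (\<forall>x. (\<Sum>j\<in>V. C (x + single j 1)) = 0)
     \<and> (\<forall>x. (\<exists>j\<in>V. d \<le> lookup x j) \<longrightarrow> C x = 0)
     \<and> C a \<noteq> 0 \<and> keys a \<subseteq> V \<and> mdeg a = D"

definition cokernel_witness ::
    "nat \<Rightarrow> nat \<Rightarrow> (nat \<Rightarrow>\<^sub>0 nat) \<Rightarrow> nat \<Rightarrow> ((nat \<Rightarrow>\<^sub>0 nat) \<Rightarrow> 'k::comm_ring_1) \<Rightarrow> (nat \<Rightarrow>\<^sub>0 nat) \<Rightarrow> bool" where
  "cokernel_witness n d e D C a \<longleftrightarrow>
     cokernel_block {..<n} d D C a \<and> (\<forall>x. (\<forall>j. lookup e j \<le> lookup x j) \<longrightarrow> C x = 0)"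

lemma pairing_powers_and_monomial_eq_0:
  fixes p :: "'k::comm_ring_1 mpoly"
  assumes "p \<in> ideal_gen n (powers_and_monomial n d e)"
    and "\<And>x j. j < n \<Longrightarrow> d \<le> lookup x j \<Longrightarrow> C x = 0"
    and "\<And>x. \<forall>j. lookup e j \<le> lookup x j \<Longrightarrow> C x = 0"
  shows "pairing C p = 0"
proof (rule pairing_ideal_gen_eq_0[OF assms(1)])
  fix g :: "'k mpoly" assume "g \<in> powers_and_monomial n d e"
  then consider "g = single e 1" | j where "j < n" "g = single (single j d) 1"
    unfolding powers_and_monomial_def pure_powers_def by (auto simp: Var_power)
  then show "\<exists>e. g = single e 1 \<and> (\<forall>x. C (x + e) = 0)"
  proof cases
    case 1
    then show ?thesis
      using assms(3) by (auto simp: lookup_add)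
  next
    case (2 j)
    have "C (x + single j d) = 0" for x
      using assms(2)[OF \<open>j < n\<close>, of "x + single j d"] by (simp add: lookup_add)
    with 2 show ?thesis
      by blast
  qed
qed

lemma not_mult_surjective_if_cokernel_witness:
  fixes C :: "(nat \<Rightarrow>\<^sub>0 nat) \<Rightarrow> 'k::comm_ring_1"
  assumes "cokernel_witness n d e (Suc i) C a"
  shows "\<not> mult_surjective n (powers_and_monomial n d e :: 'k mpoly set) i"
proof
  assume surj: "mult_surjective n (powers_and_monomial n d e :: 'k mpoly set) i"
  from assms have C: "\<forall>x. (\<Sum>j<n. C (x + single j 1)) = 0"
    "\<And>x j. j < n \<Longrightarrow> d \<le> lookup x j \<Longrightarrow> C x = 0"
    "\<And>x. \<forall>j. lookup e j \<le> lookup x j \<Longrightarrow> C x = 0"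
    "C a \<noteq> 0" "keys a \<subseteq> {..<n}" "mdeg a = Suc i"
    by (auto simp: cokernel_witness_def cokernel_block_def)
  let ?g = "single a 1 :: 'k mpoly"
  have "in_S n ?g" "homog (Suc i) ?g"
    using C(5,6) by (simp_all add: in_S_iff_vars_in vars_in_single homog_single)
  then obtain f where "?g - lin_form n * f \<in> ideal_gen n (powers_and_monomial n d e)"
    using surj unfolding mult_surjective_def by blast
  then have "pairing C (?g - lin_form n * f) = 0"
    using C(2,3) by (rule pairing_powers_and_monomial_eq_0)
  moreover have "pairing C (lin_form n * f) = 0"
    using C(1) by (intro pairing_lin_form_mult_eq_0) auto
  moreover have "pairing C ?g = C a"
    by (simp add: pairing_def)
  ultimately show False
    using C(4) by (simp add: pairing_diff)
qed

lemma cokernel_block_tensor: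
  fixes C C' :: "(nat \<Rightarrow>\<^sub>0 nat) \<Rightarrow> 'k::idom"
  assumes VW: "finite V" "finite W" "V \<inter> W = {}"
    and C: "cokernel_block V d D C a" and C': "cokernel_block W d D' C' b"
  shows "cokernel_block (V \<union> W) d (D + D') (\<lambda>x. C x * C' x) (a + b)"
proof -
  have dep: "depends_only_on V C" "depends_only_on W C'"
    using C C' by (simp_all add: cokernel_block_def)
  have "(\<Sum>j\<in>V \<union> W. C (x + single j 1) * C' (x + single j 1))
      = (\<Sum>j\<in>V. C (x + single j 1)) * C' x + C x * (\<Sum>j\<in>W. C' (x + single j 1))" for x
  proof -
    have "C' (x + single j 1) = C' x" if "j \<in> V" for j
      using that VW(3) by (intro depends_only_on_add_single[OF dep(2)]) blast
    moreover have "C (x + single j 1) = C x" if "j \<in> W" for j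
      using that VW(3) by (intro depends_only_on_add_single[OF dep(1)]) blast
    ultimately show ?thesis
      using VW by (simp add: sum.union_disjoint sum_distrib_left sum_distrib_right)
  qed
  then have "\<forall>x. (\<Sum>j\<in>V \<union> W. C (x + single j 1) * C' (x + single j 1)) = 0"
    using C C' by (simp add: cokernel_block_def)
  moreover have "depends_only_on (V \<union> W) (\<lambda>x. C x * C' x)"
    using dep unfolding depends_only_on_def by (metis UnCI)
  moreover have "C (a + b) * C' (a + b) \<noteq> 0"
  proof -
    have "lookup b j = 0" if "j \<in> V" for j
      using C' VW(3) that by (auto simp: cokernel_block_def in_keys_iff)
    moreover have "lookup a j = 0" if "j \<in> W" for j
      using C VW(3) that by (auto simp: cokernel_block_def in_keys_iff)
    ultimately have "C (a + b) = C a" "C' (a + b) = C' b"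
      using dep unfolding depends_only_on_def by (simp_all add: lookup_add)
    then show ?thesis
      using C C' by (simp add: cokernel_block_def)
  qed
  ultimately show ?thesis
    using C C' keys_add[of a b] by (auto simp: cokernel_block_def mdeg_add)
qed

lemma cokernel_witness_tensor:
  fixes C C' :: "(nat \<Rightarrow>\<^sub>0 nat) \<Rightarrow> 'k::idom"
  assumes "cokernel_witness n d e D C a" "cokernel_block {n..<n + k} d D' C' b"
  shows "cokernel_witness (n + k) d e (D + D') (\<lambda>x. C x * C' x) (a + b)"
proof -
  have "cokernel_block ({..<n} \<union> {n..<n + k}) d (D + D') (\<lambda>x. C x * C' x) (a + b)"
    using assms by (intro cokernel_block_tensor) (auto simp: cokernel_witness_def)
  moreover have "{..<n} \<union> {n..<n + k} = {..<n + k}"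
    by auto
  ultimately show ?thesis
    using assms(1) by (simp add: cokernel_witness_def)
qed

definition alt_sign :: "nat \<Rightarrow> nat \<Rightarrow> nat \<Rightarrow> 'k::comm_ring_1" where
  "alt_sign d u v = (if u + v = d - 1 then (-1) ^ u else 0)"

lemma cokernel_block_alt_sign:
  assumes "1 \<le> d"
  shows "cokernel_block {n..<n + 2} d (d - 1) (\<lambda>x. alt_sign d (lookup x n) (lookup x (Suc n)) :: 'k::comm_ring_1)
    (single n (d - 1))"
  using assms
  by (auto simp: cokernel_block_def depends_only_on_def alt_sign_def numeral_2_eq_2 lookup_add lookup_single
      atLeastLessThanSuc minus_one_power_iff)

lemma cokernel_witness_add_pairs:
  fixes C :: "(nat \<Rightarrow>\<^sub>0 nat) \<Rightarrow> 'k::idom"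
  assumes "cokernel_witness n d e D C a" "1 \<le> d"
  shows "\<exists>C' a'. cokernel_witness (n + 2 * k) d e (D + k * (d - 1)) (C' :: (nat \<Rightarrow>\<^sub>0 nat) \<Rightarrow> 'k) a'"
proof (induction k)
  case (Suc k)
  then obtain C' a' where "cokernel_witness (n + 2 * k) d e (D + k * (d - 1)) (C' :: (nat \<Rightarrow>\<^sub>0 nat) \<Rightarrow> 'k) a'"
    by blast
  then have "cokernel_witness (n + 2 * k + 2) d e (D + k * (d - 1) + (d - 1))
      (\<lambda>x. C' x * alt_sign d (lookup x (n + 2 * k)) (lookup x (Suc (n + 2 * k)))) (a' + single (n + 2 * k) (d - 1))"
    using cokernel_witness_tensor cokernel_block_alt_sign[OF assms(2)] by blast
  moreover have "n + 2 * k + 2 = n + 2 * Suc k" "D + k * (d - 1) + (d - 1) = D + Suc k * (d - 1)"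
    by simp_all
  ultimately show ?case
    by metis
qed (use assms(1) in auto)

lemma fails_WLP_if_witnesses:
  fixes f :: "'k::idom mpoly" and C :: "(nat \<Rightarrow>\<^sub>0 nat) \<Rightarrow> 'k"
  assumes "kernel_witness n d e i f a" "cokernel_witness n d e (Suc i) C b"
  shows "fails_WLP_in_degree n (powers_and_monomial n d e :: 'k mpoly set) i"
  unfolding fails_WLP_in_degree_def
  using not_mult_injective_if_kernel_witness[OF assms(1)] not_mult_surjective_if_cokernel_witness[OF assms(2)]
  by blast

definition expvec :: "nat list \<Rightarrow> (nat \<Rightarrow>\<^sub>0 nat)" where
  "expvec l = (\<Sum>j<length l. single j (l ! j))"

lemma lookup_expvec: "lookup (expvec l) j = (if j < length l then l ! j else 0)"
  by (simp add: expvec_def lookup_sum lookup_single when_def)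

lemma expvec_eq_iff: "length l = length l' \<Longrightarrow> expvec l = expvec l' \<longleftrightarrow> l = l'"
  by (auto simp: poly_mapping_eq_iff fun_eq_iff lookup_expvec intro: nth_equalityI)

lemma keys_expvec: "length l \<le> n \<Longrightarrow> keys (expvec l) \<subseteq> {..<n}"
  by (auto simp: in_keys_iff lookup_expvec split: if_splits)

lemma mdeg_expvec: "mdeg (expvec l) = sum_list l"
proof -
  have "mdeg (expvec l) = (\<Sum>j<length l. lookup (expvec l) j)"
    by (rule mdeg_eq_sum_superset) (simp_all add: keys_expvec)
  also have "\<dots> = sum_list l"
    by (simp add: lookup_expvec sum_list_sum_nth atLeast0LessThan)
  finally show ?thesis .
qed

lemma single_expvec_eq_prod:
  "(single (expvec l) 1 :: 'k::comm_ring_1 mpoly) = (\<Prod>j<length l. Var j ^ (l ! j))"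
proof -
  have single_sum: "single (\<Sum>j\<in>A. e j) 1 = (\<Prod>j\<in>A. single (e j) (1 :: 'k))"
    if "finite A" for A and e :: "nat \<Rightarrow> _"
    using that
  proof (induction A rule: finite_induct)
    case (insert x F)
    then show ?case
      by (simp add: mult_single flip: insert.IH)
  qed simp
  show ?thesis
    unfolding expvec_def Var_power by (rule single_sum) simp
qed

definition scaled_monomial :: "int \<Rightarrow> nat list \<Rightarrow> 'k::comm_ring_1 mpoly" where
  "scaled_monomial c l = single (expvec l) (of_int c)"

lemma scaled_monomial_eq_prod: "scaled_monomial c l = of_int c * (\<Prod>j<length l. Var j ^ (l ! j))"
  by (simp flip: single_expvec_eq_prod single_of_int add: scaled_monomial_def mult_single)

lemma lookup_scaled_monomial:
  "length l = length l' \<Longrightarrow> lookup (scaled_monomial c l) (expvec l') = (if l = l' then of_int c else 0)"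
  by (simp add: scaled_monomial_def lookup_single when_def expvec_eq_iff)

lemma vars_in_scaled_monomial: "length l \<le> n \<Longrightarrow> vars_in {..<n} (scaled_monomial c l)"
  unfolding scaled_monomial_def by (intro vars_in_single keys_expvec)

lemma homog_scaled_monomial: "sum_list l = i \<Longrightarrow> homog i (scaled_monomial c l)"
  unfolding scaled_monomial_def by (rule homog_single) (simp add: mdeg_expvec)

lemma scaled_monomial_length_3: "scaled_monomial c [a, b, e] = of_int c * Var 0 ^ a * Var 1 ^ b * Var 2 ^ e"
  by (simp add: scaled_monomial_eq_prod lessThan_Suc eval_nat_numeral mult_ac)

lemma scaled_monomial_length_4:
  "scaled_monomial c [a, b, e, f] = of_int c * Var 0 ^ a * Var 1 ^ b * Var 2 ^ e * Var 3 ^ f"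
  by (simp add: scaled_monomial_eq_prod lessThan_Suc eval_nat_numeral mult_ac)

lemma scaled_monomial_length_6:
  "scaled_monomial c [a, b, e, f, g, h] = of_int c * Var 0 ^ a * Var 1 ^ b * Var 2 ^ e * Var 3 ^ f * Var 4 ^ g * Var 5 ^ h"
  by (simp add: scaled_monomial_eq_prod lessThan_Suc eval_nat_numeral mult_ac)

definition set_vars_zero :: "nat set \<Rightarrow> 'k::comm_ring_1 mpoly \<Rightarrow> 'k mpoly" where
  "set_vars_zero Z p = Poly_Mapping.mapp (\<lambda>a c. if keys a \<inter> Z = {} then c else 0) p"

lemma lookup_set_vars_zero:
  "lookup (set_vars_zero Z p) a = (if keys a \<inter> Z = {} then lookup p a else 0)"
  by (simp add: set_vars_zero_def lookup_mapp when_def in_keys_iff)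

lemma set_vars_zero_add: "set_vars_zero Z (p + q) = set_vars_zero Z p + set_vars_zero Z q"
  by (rule poly_mapping_eqI) (simp add: lookup_set_vars_zero lookup_add)

lemma set_vars_zero_uminus: "set_vars_zero Z (- p) = - set_vars_zero Z p"
  by (rule poly_mapping_eqI) (simp add: lookup_set_vars_zero)

lemma set_vars_zero_diff: "set_vars_zero Z (p - q) = set_vars_zero Z p - set_vars_zero Z q"
  by (rule poly_mapping_eqI) (simp add: lookup_set_vars_zero lookup_minus)

lemma set_vars_zero_sum: "set_vars_zero Z (sum f A) = (\<Sum>i\<in>A. set_vars_zero Z (f i))"
  by (rule poly_mapping_eqI) (simp add: lookup_set_vars_zero lookup_sum)

lemma set_vars_zero_single:
  "set_vars_zero Z (single a c) = (if keys a \<inter> Z = {} then single a c else 0)"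
  by (rule poly_mapping_eqI) (simp add: lookup_set_vars_zero lookup_single when_def)

lemma set_vars_zero_mult: "set_vars_zero Z (p * q) = set_vars_zero Z p * set_vars_zero Z q"
proof -
  have "set_vars_zero Z p * set_vars_zero Z q
      = (\<Sum>x\<in>keys p. \<Sum>y\<in>keys q. set_vars_zero Z (single x (lookup p x)) * set_vars_zero Z (single y (lookup q y)))"
    by (subst (1 2) poly_mapping_sum_single)
       (simp add: set_vars_zero_sum sum_distrib_left sum_distrib_right sum.swap[of _ "keys q"])
  also have "\<dots> = (\<Sum>x\<in>keys p. \<Sum>y\<in>keys q. set_vars_zero Z (single (x + y) (lookup p x * lookup q y)))"
    by (intro sum.cong refl) (auto simp: set_vars_zero_single mult_single keys_add_nat_eq)
  also have "\<dots> = set_vars_zero Z (p * q)"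
    by (simp add: mult_eq_sum_single[of p q] set_vars_zero_sum)
  finally show ?thesis ..
qed

lemma set_vars_zero_power: "set_vars_zero Z (p ^ k) = set_vars_zero Z p ^ k"
  by (induction k) (simp_all add: set_vars_zero_mult set_vars_zero_single flip: single_one)

lemma set_vars_zero_Var: "set_vars_zero Z (Var j) = (if j \<in> Z then 0 else Var j)"
  by (simp add: Var_def set_vars_zero_single)

lemmas set_vars_zero_simps = set_vars_zero_add set_vars_zero_uminus set_vars_zero_diff
  set_vars_zero_sum set_vars_zero_mult set_vars_zero_power set_vars_zero_Var

section \<open>The case d \<ge> 5\<close>

lemma binomial_power_mult_diff:
  fixes x y :: "'a::comm_ring_1"
  shows "(x + y) ^ Suc M * (x - y) = x ^ Suc (Suc M) - y ^ Suc (Suc M)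
     + (\<Sum>k<Suc M. (of_nat (Suc M choose k) - of_nat (Suc M choose Suc k)) * x ^ Suc k * y ^ (Suc M - k))"
proof -
  define N where "N = Suc M"
  have bin: "(x + y) ^ N = (\<Sum>k\<le>N. of_nat (N choose k) * x ^ k * y ^ (N - k))"
    by (rule binomial_ring)
  have times_x: "(x + y) ^ N * x = (\<Sum>k<N. of_nat (N choose k) * x ^ Suc k * y ^ (N - k)) + x ^ Suc N"
  proof -
    have "(x + y) ^ N * x = (\<Sum>k\<le>N. of_nat (N choose k) * x ^ Suc k * y ^ (N - k))"
      by (simp add: bin sum_distrib_left sum_distrib_right mult_ac)
    then show ?thesis
      by (simp add: lessThan_Suc_atMost[symmetric])
  qed
  have times_y: "(x + y) ^ N * y = y ^ Suc N + (\<Sum>k<N. of_nat (N choose Suc k) * x ^ Suc k * y ^ (N - k))"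
  proof -
    have "(x + y) ^ N * y = (\<Sum>k\<le>N. of_nat (N choose k) * x ^ k * y ^ Suc (N - k))"
      by (simp add: bin sum_distrib_left sum_distrib_right mult_ac)
    also have "\<dots> = y ^ Suc N + (\<Sum>k\<le>M. of_nat (N choose Suc k) * x ^ Suc k * y ^ Suc (N - Suc k))"
      unfolding N_def by (subst sum.atMost_Suc_shift) simp
    also have "(\<Sum>k\<le>M. of_nat (N choose Suc k) * x ^ Suc k * y ^ Suc (N - Suc k))
        = (\<Sum>k<N. of_nat (N choose Suc k) * x ^ Suc k * y ^ (N - k))"
      unfolding N_def lessThan_Suc_atMost[symmetric]
      by (intro sum.cong refl) (simp add: Suc_diff_le del: binomial_Suc_Suc)
    finally show ?thesis .
  qed
  have "(x + y) ^ N * (x - y) = (x + y) ^ N * x - (x + y) ^ N * y"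
    by (simp add: right_diff_distrib)
  also have "\<dots> = x ^ Suc N - y ^ Suc N
      + (\<Sum>k<N. (of_nat (N choose k) - of_nat (N choose Suc k)) * x ^ Suc k * y ^ (N - k))"
    unfolding times_x times_y by (simp add: algebra_simps sum_subtractf)
  finally show ?thesis
    unfolding N_def .
qed

text \<open>All monomials of degree 2d - 2 in two variables except x^(d-1) y^(d-1) are divisible by a
  d-th power, and the coefficient of x^(d-1) y^(d-1) vanishes by antisymmetry.\<close>

lemma sum_power_mult_diff_in_ideal:
  assumes d: "2 \<le> d" and ij: "i < n" "j < n"
  shows "(Var i + Var j) ^ (2 * d - 3) * (Var i - Var j)
    \<in> ideal_gen n (powers_and_monomial n d e :: 'k::comm_ring_1 mpoly set)"
proof -
  define M where "M = 2 * d - 4"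
  have NM: "2 * d - 3 = Suc M"
    using d by (simp add: M_def)
  let ?I = "ideal_gen n (powers_and_monomial n d e) :: 'k mpoly set"
  have in_S: "in_S n (c * Var i ^ a * Var j ^ b :: 'k mpoly)" if "vars_in {..<n} c" for c a b
    using that ij by (simp add: in_S_iff_vars_in vars_in_mult vars_in_power vars_in_Var)
  have high_i: "c * Var i ^ a * Var j ^ b \<in> ?I" if "d \<le> a" "vars_in {..<n} c" for c :: "'k mpoly" and a b
    using Var_power_multiple_in_ideal[OF ij(1) that(1) in_S[OF that(2), of 0 b]] by (simp add: mult_ac)
  have high_j: "c * Var i ^ a * Var j ^ b \<in> ?I" if "d \<le> b" "vars_in {..<n} c" for c :: "'k mpoly" and a b
    using Var_power_multiple_in_ideal[OF ij(2) that(1) in_S[OF that(2), of a 0]] by (simp add: mult_ac)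
  have "Var i ^ Suc (Suc M) \<in> ?I" "Var j ^ Suc (Suc M) \<in> ?I"
    using high_i[of "Suc (Suc M)" 1 0] high_j[of "Suc (Suc M)" 1 0] d by (simp_all add: M_def)
  moreover have "(of_nat (Suc M choose k) - of_nat (Suc M choose Suc k)) * Var i ^ Suc k * Var j ^ (Suc M - k) \<in> ?I"
    if "k < Suc M" for k
  proof -
    consider "d \<le> Suc k" | "d \<le> Suc M - k" | "k = d - 2"
      using d that by (fastforce simp: M_def)
    then show ?thesis
    proof cases
      case 1
      then show ?thesis
        by (rule high_i) (intro vars_in_diff vars_in_const)
    next
      case 2
      then show ?thesis
        by (rule high_j) (intro vars_in_diff vars_in_const)
    next
      case 3
      then have "Suc M choose k = Suc M choose Suc k"
        using d by (subst binomial_symmetric) (auto simp: M_def)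
      then show ?thesis
        by (simp add: zero_in_ideal_gen)
    qed
  qed
  ultimately show ?thesis
    unfolding NM binomial_power_mult_diff
    by (intro ideal_gen_add ideal_gen_diff ideal_gen_sum) auto
qed

lemma sum_power_in_ideal:
  assumes d: "5 \<le> d" and n: "2 \<le> n"
  shows "(Var 0 + Var 1) ^ (2 * d - 3)
    \<in> ideal_gen n (powers_and_monomial n d (expvec [3, d - 3]) :: 'k::comm_ring_1 mpoly set)"
proof -
  let ?N = "2 * d - 3"
  let ?I = "ideal_gen n (powers_and_monomial n d (expvec [3, d - 3])) :: 'k mpoly set"
  have in_S: "in_S n (of_nat c * Var 0 ^ a * Var 1 ^ b :: 'k mpoly)" for c a b
    using n by (simp add: in_S_iff_vars_in vars_in_mult vars_in_power vars_in_Var)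
  have "of_nat (?N choose k) * Var 0 ^ k * Var 1 ^ (?N - k) \<in> ?I" for k
  proof -
    consider "d \<le> k" | "d \<le> ?N - k" | "3 \<le> k" "d - 3 \<le> ?N - k"
      using d by fastforce
    then show ?thesis
    proof cases
      case 1
      then show ?thesis
        using Var_power_multiple_in_ideal[OF _ 1 in_S[of "?N choose k" 0 "?N - k"], of 0] n
        by (simp add: mult_ac)
    next
      case 2
      then show ?thesis
        using Var_power_multiple_in_ideal[OF _ 2 in_S[of "?N choose k" k 0], of 1] n
        by (simp add: mult_ac)
    next
      case 3
      have "k - 3 + 3 = k" "?N - k - (d - 3) + (d - 3) = ?N - k"
        using 3 by (simp_all only: le_add_diff_inverse2)
      then have "Var 0 ^ k = Var 0 ^ (k - 3) * (Var 0 ^ 3 :: 'k mpoly)"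
        "Var 1 ^ (?N - k) = Var 1 ^ (?N - k - (d - 3)) * (Var 1 ^ (d - 3) :: 'k mpoly)"
        by (metis power_add)+
      then have "of_nat (?N choose k) * Var 0 ^ k * Var 1 ^ (?N - k)
          = (of_nat (?N choose k) * Var 0 ^ (k - 3) * Var 1 ^ (?N - k - (d - 3))) * (Var 0 ^ 3 * Var 1 ^ (d - 3) :: 'k mpoly)"
        by (simp only: mult_ac)
      also have "Var 0 ^ 3 * Var 1 ^ (d - 3) = (single (expvec [3, d - 3]) 1 :: 'k mpoly)"
        by (simp add: single_expvec_eq_prod lessThan_Suc numeral_2_eq_2)
      finally show ?thesis
        using monomial_multiple_in_ideal[OF in_S] by simp
    qed
  qed
  then show ?thesis
    by (subst binomial_ring) (intro ideal_gen_sum)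
qed

definition kernel_form_large_d :: "nat \<Rightarrow> 'k::comm_ring_1 mpoly" where
  "kernel_form_large_d d = (\<Sum>i<2 * d - 3. (- (Var 2 + Var 3)) ^ (2 * d - 3 - Suc i) * (Var 0 + Var 1) ^ i)
     * (Var 2 - Var 3)"

lemma set_vars_zero_kernel_form_large_d:
  "set_vars_zero {0, 2} (kernel_form_large_d d :: 'k::comm_ring_1 mpoly)
     = (\<Sum>i<2 * d - 3. single (single 3 (2 * d - 3 - Suc i) + single 1 i + single 3 1)
                                ((-1) ^ (2 * d - 3 - Suc i) * (-1)))"
proof -
  have minus_Var: "(- Var 3 :: 'k mpoly) = single (single 3 1) (-1)"
    by (simp add: Var_def single_uminus)
  have "set_vars_zero {0, 2} (kernel_form_large_d d :: 'k mpoly)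
      = (\<Sum>i<2 * d - 3. (- Var 3) ^ (2 * d - 3 - Suc i) * Var 1 ^ i) * (- Var 3)"
    by (simp add: kernel_form_large_d_def set_vars_zero_simps)
  then show ?thesis
    unfolding sum_distrib_right minus_Var_power Var_power unfolding minus_Var
    by (simp add: mult_single)
qed

lemma lookup_kernel_form_large_d:
  assumes d: "3 \<le> d"
  shows "lookup (kernel_form_large_d d :: 'k::comm_ring_1 mpoly) (expvec [0, d - 1, 0, d - 2]) \<noteq> 0"
proof -
  let ?N = "2 * d - 3"
  let ?t = "expvec [0, d - 1, 0, d - 2]"
  let ?e = "\<lambda>i. single 3 (?N - Suc i) + single 1 i + single 3 1 :: nat \<Rightarrow>\<^sub>0 nat"
  have exps: "?e i = ?t \<longleftrightarrow> i = d - 1" for i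
  proof
    assume "?e i = ?t"
    from arg_cong[OF this, of "\<lambda>x. lookup x 1"] show "i = d - 1"
      by (simp add: lookup_add lookup_single lookup_expvec)
  next
    assume "i = d - 1"
    then show "?e i = ?t"
      using d by (auto simp: poly_mapping_eq_iff fun_eq_iff lookup_add lookup_single lookup_expvec
          nth_Cons' when_def)
  qed
  have "keys ?t \<inter> {0, 2} = {}"
    by (auto simp: in_keys_iff lookup_expvec)
  then have "lookup (kernel_form_large_d d :: 'k mpoly) ?t = lookup (set_vars_zero {0, 2} (kernel_form_large_d d)) ?t"
    by (simp add: lookup_set_vars_zero)
  also have "\<dots> = (\<Sum>i<?N. if i = d - 1 then (-1) ^ (?N - Suc i) * (-1) else 0)"
    unfolding set_vars_zero_kernel_form_large_d lookup_sum
  proof (intro sum.cong refl)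
    fix i
    show "lookup (single (?e i) ((-1) ^ (?N - Suc i) * (-1))) ?t
        = (if i = d - 1 then (-1) ^ (?N - Suc i) * (-1) else (0::'k))"
      using exps[of i] by (simp add: lookup_single when_def)
  qed
  also have "\<dots> = (-1) ^ (?N - d) * (-1)"
    using d by simp
  finally show ?thesis
    by (simp add: minus_one_power_iff)
qed

lemma homog_kernel_form_large_d:
  assumes "2 \<le> d"
  shows "homog (2 * d - 3) (kernel_form_large_d d :: 'k::comm_ring_1 mpoly)"
proof -
  let ?N = "2 * d - 3"
  have linear: "homog 1 (Var i + Var j :: 'k mpoly)" for i j
    by (rule homog_add[OF homog_Var homog_Var])
  have "homog (?N - 1) ((- (Var 2 + Var 3)) ^ (?N - Suc i) * (Var 0 + Var 1) ^ i :: 'k mpoly)"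
    if "i < ?N" for i
    by (rule homog_mult[OF homog_power[OF homog_uminus[OF linear]] homog_power[OF linear]])
       (use that in linarith)
  then have "homog (?N - 1) (\<Sum>i<?N. (- (Var 2 + Var 3)) ^ (?N - Suc i) * (Var 0 + Var 1) ^ i :: 'k mpoly)"
    by (intro homog_sum) simp
  then show ?thesis
    unfolding kernel_form_large_d_def
    by (rule homog_mult[OF _ homog_diff[OF homog_Var homog_Var]]) (use assms in simp)
qed

lemma lin_form_mult_kernel_form_large_d:
  "lin_form 4 * kernel_form_large_d d
     = (Var 2 - Var 3) * (Var 0 + Var 1) ^ (2 * d - 3)
       - (-1) ^ (2 * d - 3) * ((Var 2 + Var 3) ^ (2 * d - 3) * (Var 2 - Var 3) :: 'k::comm_ring_1 mpoly)"
proof -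
  let ?N = "2 * d - 3"
  let ?a = "Var 0 + Var 1 :: 'k mpoly" and ?b = "Var 2 + Var 3 :: 'k mpoly"
  have L: "lin_form 4 = ?a - - ?b"
    by (simp add: lin_form_def lessThan_Suc eval_nat_numeral)
  have "lin_form 4 * kernel_form_large_d d = (?a ^ ?N - (- ?b) ^ ?N) * (Var 2 - Var 3)"
    unfolding kernel_form_large_d_def power_diff_sumr2 L by (simp only: mult.assoc)
  then show ?thesis
    unfolding power_minus[of ?b] by (simp add: algebra_simps)
qed

lemma kernel_witness_large_d:
  assumes d: "5 \<le> d"
  shows "kernel_witness 4 d (expvec [3, d - 3]) (2 * d - 3) (kernel_form_large_d d :: 'k::idom mpoly)
    (expvec [0, d - 1, 0, d - 2])"
proof -
  let ?I = "ideal_gen 4 (powers_and_monomial 4 d (expvec [3, d - 3])) :: 'k mpoly set"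
  have "in_S 4 (kernel_form_large_d d :: 'k mpoly)"
    unfolding kernel_form_large_d_def in_S_iff_vars_in
    by (intro vars_in_sum vars_in_mult vars_in_power vars_in_uminus vars_in_add vars_in_diff vars_in_Var)
       auto
  moreover have "lin_form 4 * kernel_form_large_d d \<in> ?I"
    unfolding lin_form_mult_kernel_form_large_d
  proof (rule ideal_gen_diff)
    show "(Var 2 - Var 3) * (Var 0 + Var 1) ^ (2 * d - 3) \<in> ?I"
      using sum_power_in_ideal[OF d, of 4]
      by (intro ideal_gen_mult) (simp_all add: in_S_iff_vars_in vars_in_diff vars_in_Var)
    show "(-1) ^ (2 * d - 3) * ((Var 2 + Var 3) ^ (2 * d - 3) * (Var 2 - Var 3)) \<in> ?I"
      by (rule ideal_gen_mult[OF sum_power_mult_diff_in_ideal])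
         (use d vars_in_power[OF vars_in_uminus[OF vars_in_const(2)], of "{..<4}" "2 * d - 3"]
           in \<open>simp_all add: in_S_iff_vars_in\<close>)
  qed
  moreover have "standard_monomial 4 d (expvec [3, d - 3]) (expvec [0, d - 1, 0, d - 2])"
  proof -
    have "lookup (expvec [3, d - 3]) 0 = 3" "lookup (expvec [0, d - 1, 0, d - 2]) 0 = 0"
      by (simp_all add: lookup_expvec)
    then show ?thesis
      using d by (auto simp: standard_monomial_def lookup_expvec nth_Cons' intro!: exI[of _ 0])
  qed
  moreover have "lookup (kernel_form_large_d d :: 'k mpoly) (expvec [0, d - 1, 0, d - 2]) \<noteq> 0"
    by (rule lookup_kernel_form_large_d) (use d in simp)
  ultimately show ?thesis
    using homog_kernel_form_large_d[of d] d by (simp add: kernel_witness_def)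
qed

lemma cokernel_witness_alt_sign:
  assumes "3 \<le> d"
  shows "cokernel_witness 2 d (expvec [3, d - 3]) (d - 1)
    (\<lambda>x. alt_sign d (lookup x 0) (lookup x 1) :: 'k::comm_ring_1) (single 0 (d - 1))"
proof -
  have "alt_sign d (lookup x 0) (lookup x 1) = (0::'k)"
    if "\<forall>j. lookup (expvec [3, d - 3]) j \<le> lookup x j" for x
    using that[rule_format, of 0] that[rule_format, of 1] assms
    by (simp add: alt_sign_def lookup_expvec)
  then show ?thesis
    using cokernel_block_alt_sign[of d 0] assms by (simp add: cokernel_witness_def atLeast0LessThan numeral_2_eq_2)
qed

definition vandermonde3 :: "nat \<Rightarrow> nat \<Rightarrow> nat \<Rightarrow> int" where
  "vandermonde3 a b c =
     (if a \<le> 2 \<and> b \<le> 2 \<and> c \<le> 2 then (int b - int a) * (int c - int a) * (int c - int b) else 0)"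

definition vandermonde4 :: "nat \<Rightarrow> nat \<Rightarrow> nat \<Rightarrow> nat \<Rightarrow> int" where
  "vandermonde4 a b c e =
     (if a \<le> 3 \<and> b \<le> 3 \<and> c \<le> 3 \<and> e \<le> 3 then
        (int b - int a) * (int c - int a) * (int e - int a) * (int c - int b) * (int e - int b) * (int e - int c)
      else 0)"

lemma vandermonde3_shift_sum:
  "vandermonde3 (Suc a) b c + vandermonde3 a (Suc b) c + vandermonde3 a b (Suc c) = 0"
proof (cases "a \<le> 2 \<and> b \<le> 2 \<and> c \<le> 2")
  case True
  then have "a \<in> {0, 1, 2}" "b \<in> {0, 1, 2}" "c \<in> {0, 1, 2}"
    by auto
  then show ?thesis
    by (auto simp: vandermonde3_def)
qed (auto simp: vandermonde3_def)

lemma vandermonde4_shift_sum: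
  "vandermonde4 (Suc a) b c e + vandermonde4 a (Suc b) c e + vandermonde4 a b (Suc c) e
     + vandermonde4 a b c (Suc e) = 0"
proof (cases "a \<le> 3 \<and> b \<le> 3 \<and> c \<le> 3 \<and> e \<le> 3")
  case True
  then have "a \<in> {0, 1, 2, 3}" "b \<in> {0, 1, 2, 3}" "c \<in> {0, 1, 2, 3}" "e \<in> {0, 1, 2, 3}"
    by auto
  then show ?thesis
    by (auto simp: vandermonde4_def)
qed (auto simp: vandermonde4_def)

lemma vandermonde3_eq_0_if_positive: "0 < a \<Longrightarrow> 0 < b \<Longrightarrow> 0 < c \<Longrightarrow> vandermonde3 a b c = 0"
  by (cases "a \<le> 2 \<and> b \<le> 2 \<and> c \<le> 2") (auto simp: vandermonde3_def le_Suc_eq numeral_2_eq_2)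

lemma vandermonde4_eq_0_if_positive:
  "0 < a \<Longrightarrow> 0 < b \<Longrightarrow> 0 < c \<Longrightarrow> 0 < e \<Longrightarrow> vandermonde4 a b c e = 0"
proof (cases "a \<le> 3 \<and> b \<le> 3 \<and> c \<le> 3 \<and> e \<le> 3")
  case True
  assume "0 < a" "0 < b" "0 < c" "0 < e"
  with True have "a \<in> {1, 2, 3}" "b \<in> {1, 2, 3}" "c \<in> {1, 2, 3}" "e \<in> {1, 2, 3}"
    by auto
  then show ?thesis
    by (auto simp: vandermonde4_def)
qed (auto simp: vandermonde4_def)

lemma sum_atLeastLessThan_add_3: "(\<Sum>j=n..<n + 3. f j) = f n + f (Suc n) + f (Suc (Suc n))"
  by (simp add: numeral_3_eq_3 add.assoc)

lemma sum_atLeastLessThan_add_4: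
  "(\<Sum>j=n..<n + 4. f j) = f n + f (Suc n) + f (Suc (Suc n)) + f (Suc (Suc (Suc n)))"
  by (simp add: eval_nat_numeral add.assoc)

lemma cokernel_block_vandermonde3:
  "cokernel_block {n..<n + 3} 3 3
     (\<lambda>x. of_int (vandermonde3 (lookup x n) (lookup x (Suc n)) (lookup x (Suc (Suc n)))) :: 'k::{comm_ring_1, ring_char_0})
     (single (Suc n) 1 + single (Suc (Suc n)) 2)"
proof -
  let ?C = "\<lambda>x. of_int (vandermonde3 (lookup x n) (lookup x (Suc n)) (lookup x (Suc (Suc n)))) :: 'k"
  have "(\<Sum>j=n..<n + 3. ?C (x + single j 1)) = of_int (vandermonde3 (Suc (lookup x n)) (lookup x (Suc n)) (lookup x (Suc (Suc n)))
      + vandermonde3 (lookup x n) (Suc (lookup x (Suc n))) (lookup x (Suc (Suc n)))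
      + vandermonde3 (lookup x n) (lookup x (Suc n)) (Suc (lookup x (Suc (Suc n)))))" for x
    unfolding sum_atLeastLessThan_add_3 by (simp add: lookup_add lookup_single)
  then have "\<forall>x. (\<Sum>j=n..<n + 3. ?C (x + single j 1)) = 0"
    by (simp only: vandermonde3_shift_sum of_int_0 simp_thms)
  moreover have "\<forall>x. (\<exists>j\<in>{n..<n + 3}. 3 \<le> lookup x j) \<longrightarrow> ?C x = 0"
  proof (intro allI impI)
    fix x :: "nat \<Rightarrow>\<^sub>0 nat" assume "\<exists>j\<in>{n..<n + 3}. 3 \<le> lookup x j"
    then obtain j where j: "j \<in> {n..<n + 3}" "3 \<le> lookup x j"
      by blast
    then have "j = n \<or> j = Suc n \<or> j = Suc (Suc n)"
      by (simp, arith)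
    with j show "?C x = 0"
      by (auto simp: vandermonde3_def)
  qed
  moreover have "keys (single (Suc n) 1 + single (Suc (Suc n)) (2::nat)) \<subseteq> {n..<n + 3}"
    by (auto simp: keys_add_nat_eq)
  moreover have "depends_only_on {n..<n + 3} ?C"
    by (simp add: depends_only_on_def)
  moreover have "?C (single (Suc n) 1 + single (Suc (Suc n)) 2) \<noteq> 0"
    by (simp add: lookup_add lookup_single vandermonde3_def)
  moreover have "mdeg (single (Suc n) 1 + single (Suc (Suc n)) (2::nat)) = 3"
    by (simp add: mdeg_add)
  ultimately show ?thesis
    unfolding cokernel_block_def by blast
qed

lemma cokernel_block_vandermonde4:
  "cokernel_block {n..<n + 4} 4 6
     (\<lambda>x. of_int (vandermonde4 (lookup x n) (lookup x (Suc n)) (lookup x (Suc (Suc n))) (lookup x (Suc (Suc (Suc n)))))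
       :: 'k::{comm_ring_1, ring_char_0})
     (single (Suc n) 1 + single (Suc (Suc n)) 2 + single (Suc (Suc (Suc n))) 3)"
proof -
  let ?C = "\<lambda>x. of_int (vandermonde4 (lookup x n) (lookup x (Suc n)) (lookup x (Suc (Suc n))) (lookup x (Suc (Suc (Suc n))))) :: 'k"
  have "(\<Sum>j=n..<n + 4. ?C (x + single j 1))
      = of_int (vandermonde4 (Suc (lookup x n)) (lookup x (Suc n)) (lookup x (Suc (Suc n))) (lookup x (Suc (Suc (Suc n))))
      + vandermonde4 (lookup x n) (Suc (lookup x (Suc n))) (lookup x (Suc (Suc n))) (lookup x (Suc (Suc (Suc n))))
      + vandermonde4 (lookup x n) (lookup x (Suc n)) (Suc (lookup x (Suc (Suc n)))) (lookup x (Suc (Suc (Suc n))))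
      + vandermonde4 (lookup x n) (lookup x (Suc n)) (lookup x (Suc (Suc n))) (Suc (lookup x (Suc (Suc (Suc n))))))" for x
    unfolding sum_atLeastLessThan_add_4 by (simp add: lookup_add lookup_single)
  then have "\<forall>x. (\<Sum>j=n..<n + 4. ?C (x + single j 1)) = 0"
    by (simp only: vandermonde4_shift_sum of_int_0 simp_thms)
  moreover have "\<forall>x. (\<exists>j\<in>{n..<n + 4}. 4 \<le> lookup x j) \<longrightarrow> ?C x = 0"
  proof (intro allI impI)
    fix x :: "nat \<Rightarrow>\<^sub>0 nat" assume "\<exists>j\<in>{n..<n + 4}. 4 \<le> lookup x j"
    then obtain j where j: "j \<in> {n..<n + 4}" "4 \<le> lookup x j"
      by blast
    then have "j = n \<or> j = Suc n \<or> j = Suc (Suc n) \<or> j = Suc (Suc (Suc n))"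
      by (simp, arith)
    with j show "?C x = 0"
      by (auto simp: vandermonde4_def)
  qed
  moreover have "keys (single (Suc n) 1 + single (Suc (Suc n)) 2 + single (Suc (Suc (Suc n))) (3::nat))
      \<subseteq> {n..<n + 4}"
    by (auto simp: keys_add_nat_eq)
  moreover have "depends_only_on {n..<n + 4} ?C"
    by (simp add: depends_only_on_def)
  moreover have "?C (single (Suc n) 1 + single (Suc (Suc n)) 2 + single (Suc (Suc (Suc n))) 3) \<noteq> 0"
    by (simp add: lookup_add lookup_single vandermonde4_def)
  moreover have "mdeg (single (Suc n) 1 + single (Suc (Suc n)) 2 + single (Suc (Suc (Suc n))) (3::nat)) = 6"
    by (simp add: mdeg_add)
  ultimately show ?thesis
    unfolding cokernel_block_def by blast
qed

section \<open>The case d = 4\<close>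

text \<open>A kernel element found by computer; the identity below exhibits its product with the linear
  form as a combination of the generators.\<close>

definition kernel_form_d4 :: "'k::comm_ring_1 mpoly" where
  "kernel_form_d4 =
     scaled_monomial (-3) [0,0,2,3] + scaled_monomial 3 [0,0,3,2] + scaled_monomial 2 [0,1,1,3]
   + scaled_monomial 1 [0,1,2,2] + scaled_monomial (-4) [0,1,3,1] + scaled_monomial (-2) [0,2,1,2]
   + scaled_monomial 1 [0,2,2,1] + scaled_monomial 3 [0,2,3,0] + scaled_monomial 2 [0,3,1,1]
   + scaled_monomial (-3) [0,3,2,0] + scaled_monomial 2 [1,0,1,3] + scaled_monomial 1 [1,0,2,2]
   + scaled_monomial (-4) [1,0,3,1] + scaled_monomial (-4) [1,1,3,0] + scaled_monomial 1 [1,2,2,0]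
   + scaled_monomial 2 [1,3,1,0] + scaled_monomial (-2) [2,0,1,2] + scaled_monomial 1 [2,0,2,1]
   + scaled_monomial 3 [2,0,3,0] + scaled_monomial 1 [2,1,2,0] + scaled_monomial (-2) [2,2,1,0]
   + scaled_monomial 2 [3,0,1,1] + scaled_monomial (-3) [3,0,2,0] + scaled_monomial 2 [3,1,1,0]"

lemma kernel_witness_d4:
  "kernel_witness 4 4 (expvec [1,1,1,1]) 5 (kernel_form_d4 :: 'k::{idom, ring_char_0} mpoly) (expvec [0,0,2,3])"
proof -
  let ?I = "ideal_gen 4 (powers_and_monomial 4 4 (expvec [1,1,1,1])) :: 'k mpoly set"
  have "in_S 4 (kernel_form_d4 :: 'k mpoly)"
    unfolding kernel_form_d4_def by (simp add: in_S_iff_vars_in vars_in_add vars_in_scaled_monomial)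
  moreover have "homog 5 (kernel_form_d4 :: 'k mpoly)"
    unfolding kernel_form_d4_def by (simp add: homog_add homog_scaled_monomial)
  moreover have "lin_form 4 * kernel_form_d4 =
        (2 * Var 2 * Var 3 - 3 * Var 2 ^ 2 + 2 * Var 1 * Var 2) * Var 0 ^ 4
      + (2 * Var 2 * Var 3 - 3 * Var 2 ^ 2 + 2 * Var 0 * Var 2) * Var 1 ^ 4
      + (3 * Var 3 ^ 2 - 4 * Var 1 * Var 3 + 3 * Var 1 ^ 2 - 4 * Var 0 * Var 3 - 4 * Var 0 * Var 1
         + 3 * Var 0 ^ 2) * Var 2 ^ 4
      + (- 3 * Var 2 ^ 2 + 2 * Var 1 * Var 2 + 2 * Var 0 * Var 2) * Var 3 ^ 4
      + (4 * Var 3 ^ 2 + 2 * Var 2 * Var 3 - 12 * Var 2 ^ 2 - 2 * Var 1 * Var 3 + 2 * Var 1 * Var 2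
         + 4 * Var 1 ^ 2 - 2 * Var 0 * Var 3 + 2 * Var 0 * Var 2 - 2 * Var 0 * Var 1 + 4 * Var 0 ^ 2)
        * (single (expvec [1,1,1,1]) 1 :: 'k mpoly)"
    unfolding kernel_form_d4_def scaled_monomial_length_4 single_expvec_eq_prod
    by (simp add: lin_form_def lessThan_Suc eval_nat_numeral algebra_simps)
  moreover have "\<dots> \<in> ?I"
    by (intro ideal_gen_add Var_power_multiple_in_ideal monomial_multiple_in_ideal)
       (simp_all add: in_S_iff_vars_in vars_in_intros)
  moreover have "lookup (kernel_form_d4 :: 'k mpoly) (expvec [0,0,2,3]) = -3"
    unfolding kernel_form_d4_def by (simp add: lookup_add lookup_scaled_monomial)
  moreover have "standard_monomial 4 4 (expvec [1,1,1,1]) (expvec [0,0,2,3])"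
    by (auto simp: standard_monomial_def lookup_expvec nth_Cons' intro!: exI[of _ 0])
  ultimately show ?thesis
    by (simp add: kernel_witness_def)
qed

lemma cokernel_witness_vandermonde4:
  "cokernel_witness 4 4 (expvec [1,1,1,1]) 6
     (\<lambda>x. of_int (vandermonde4 (lookup x 0) (lookup x 1) (lookup x 2) (lookup x 3)) :: 'k::{comm_ring_1, ring_char_0})
     (single 1 1 + single 2 2 + single 3 3)"
proof -
  have "vandermonde4 (lookup x 0) (lookup x 1) (lookup x 2) (lookup x 3) = 0"
    if "\<forall>j. lookup (expvec [1,1,1,1]) j \<le> lookup x j" for x
    using that[rule_format, of 0] that[rule_format, of 1] that[rule_format, of 2] that[rule_format, of 3]
    by (intro vandermonde4_eq_0_if_positive) (simp_all add: lookup_expvec)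
  then show ?thesis
    using cokernel_block_vandermonde4[of 0] by (simp add: cokernel_witness_def atLeast0LessThan numeral_eq_Suc)
qed

section \<open>The case d = 3\<close>

definition cubic_quotient :: "'k::comm_ring_1 mpoly" where
  "cubic_quotient = Var 0 ^ 2 + Var 1 ^ 2 + Var 2 ^ 2 - Var 0 * Var 1 - Var 0 * Var 2 - Var 1 * Var 2"

lemma kernel_witness_cubic_quotient:
  "kernel_witness 3 3 (expvec [1,1,1]) 2 (cubic_quotient :: 'k::comm_ring_1 mpoly) (expvec [0,0,2])"
proof -
  have "in_S 3 (cubic_quotient :: 'k mpoly)"
    unfolding cubic_quotient_def by (simp add: in_S_iff_vars_in vars_in_intros)
  moreover have "homog 2 (cubic_quotient :: 'k mpoly)"
  proof -
    have "homog 2 (Var i * Var j :: 'k mpoly)" for i j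
      by (rule homog_mult[OF homog_Var homog_Var]) simp
    then show ?thesis
      unfolding cubic_quotient_def power2_eq_square by (intro homog_add homog_diff)
  qed
  moreover have "lin_form 3 * cubic_quotient
      = Var 0 ^ 3 + Var 1 ^ 3 + Var 2 ^ 3 - 3 * (single (expvec [1,1,1]) 1 :: 'k mpoly)"
    unfolding cubic_quotient_def single_expvec_eq_prod
    by (simp add: lin_form_def lessThan_Suc eval_nat_numeral algebra_simps)
  moreover have "\<dots> \<in> ideal_gen 3 (powers_and_monomial 3 3 (expvec [1,1,1]))"
    by (intro ideal_gen_add ideal_gen_diff Var_power_in_ideal monomial_multiple_in_ideal)
       (simp_all add: in_S_iff_vars_in)
  moreover have "lookup (cubic_quotient :: 'k mpoly) (expvec [0,0,2]) = 1"
  proof -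
    have expansion: "cubic_quotient = scaled_monomial 1 [2,0,0] + scaled_monomial 1 [0,2,0] + scaled_monomial 1 [0,0,2]
        - scaled_monomial 1 [1,1,0] - scaled_monomial 1 [1,0,1] - (scaled_monomial 1 [0,1,1] :: 'k mpoly)"
      by (simp add: cubic_quotient_def scaled_monomial_length_3)
    show ?thesis
      unfolding expansion by (simp add: lookup_add lookup_minus lookup_scaled_monomial)
  qed
  moreover have "standard_monomial 3 3 (expvec [1,1,1]) (expvec [0,0,2])"
    by (auto simp: standard_monomial_def lookup_expvec nth_Cons' intro!: exI[of _ 0])
  ultimately show ?thesis
    by (simp add: kernel_witness_def)
qed

definition vandermonde_poly :: "nat \<Rightarrow> 'k::comm_ring_1 mpoly" where
  "vandermonde_poly n = (Var (Suc n) - Var n) * (Var (Suc (Suc n)) - Var n) * (Var (Suc (Suc n)) - Var (Suc n))"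

lemma kernel_block_vandermonde_poly:
  "kernel_block 3 3 3 3 (vandermonde_poly 3 :: 'k::comm_ring_1 mpoly) (expvec [0,0,0,0,1,2])"
proof -
  let ?G = "(\<lambda>j. Var j ^ 3) ` {3..<3 + 3} :: 'k mpoly set"
  have "vars_in {3..<3 + 3} (vandermonde_poly 3 :: 'k mpoly)"
    unfolding vandermonde_poly_def by (simp add: vars_in_intros)
  moreover have "homog 3 (vandermonde_poly 3 :: 'k mpoly)"
  proof -
    have linear: "homog 1 (Var i - Var j :: 'k mpoly)" for i j
      by (rule homog_diff[OF homog_Var homog_Var])
    show ?thesis
      unfolding vandermonde_poly_def by (rule homog_mult[OF homog_mult[OF linear linear] linear]) simp_all
  qed
  moreover have "(\<Sum>j=3..<3 + 3. Var j) * vandermonde_poly 3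
      = (Var 5 - Var 4) * Var 3 ^ 3 + (Var 3 - Var 5) * Var 4 ^ 3 + (Var 4 - Var 3) * (Var 5 ^ 3 :: 'k mpoly)"
    by (simp add: vandermonde_poly_def sum_atLeastLessThan_add_3 eval_nat_numeral algebra_simps)
  moreover have "\<dots> \<in> ideal_gen (3 + 3) ?G"
    by (intro ideal_gen_add generator_multiple_in_ideal_gen)
       (auto simp: in_S_iff_vars_in vars_in_intros)
  moreover have "lookup (vandermonde_poly 3 :: 'k mpoly) (expvec [0,0,0,0,1,2]) = 1"
  proof -
    have expansion: "vandermonde_poly 3 = scaled_monomial 1 [0,0,0,0,1,2] - scaled_monomial 1 [0,0,0,0,2,1] - scaled_monomial 1 [0,0,0,1,0,2]
        + scaled_monomial 1 [0,0,0,1,2,0] + scaled_monomial 1 [0,0,0,2,0,1] - (scaled_monomial 1 [0,0,0,2,1,0] :: 'k mpoly)"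
      by (simp add: vandermonde_poly_def scaled_monomial_length_6 eval_nat_numeral algebra_simps)
    show ?thesis
      unfolding expansion by (simp add: lookup_add lookup_minus lookup_scaled_monomial)
  qed
  moreover have "\<forall>j\<in>{3..<3 + 3}. lookup (expvec [0,0,0,0,1,2]) j < 3"
    by (auto simp: lookup_expvec nth_Cons')
  ultimately show ?thesis
    by (simp add: kernel_block_def)
qed

lemma cokernel_witness_vandermonde3:
  "cokernel_witness 3 3 (expvec [1,1,1]) 3
     (\<lambda>x. of_int (vandermonde3 (lookup x 0) (lookup x 1) (lookup x 2)) :: 'k::{comm_ring_1, ring_char_0})
     (single 1 1 + single 2 2)"
proof -
  have "vandermonde3 (lookup x 0) (lookup x 1) (lookup x 2) = 0"
    if "\<forall>j. lookup (expvec [1,1,1]) j \<le> lookup x j" for x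
    using that[rule_format, of 0] that[rule_format, of 1] that[rule_format, of 2]
    by (intro vandermonde3_eq_0_if_positive) (simp_all add: lookup_expvec)
  then show ?thesis
    using cokernel_block_vandermonde3[of 0] by (simp add: cokernel_witness_def atLeast0LessThan numeral_eq_Suc)
qed

lemma fails_WLP_large_d:
  assumes "n = 2 * m" "5 \<le> d" "4 \<le> n"
  shows "fails_WLP_in_degree n (powers_and_monomial n d (expvec [3, d - 3]) :: 'k::{idom, ring_char_0} mpoly set)
    (m * (d - 1) - 1)"
proof -
  define k where "k = m - 2"
  define c where "c = d - 5"
  have m: "m = k + 2" and d: "d = c + 5"
    using assms by (simp_all add: k_def c_def)
  have n: "4 + 2 * k = n" "2 + 2 * Suc k = n"
    using assms(1) m by simp_all
  have i: "2 * d - 3 + k * (d - 1) = m * (d - 1) - 1" "d - 1 + Suc k * (d - 1) = Suc (m * (d - 1) - 1)"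
    unfolding m d by (simp_all add: algebra_simps)
  have "keys (expvec [3, d - 3]) \<subseteq> {..<4}"
    by (rule keys_expvec) simp
  then have "\<exists>f a. kernel_witness (4 + 2 * k) d (expvec [3, d - 3]) (2 * d - 3 + k * (d - 1)) (f :: 'k mpoly) a"
    using assms(2) by (intro kernel_witness_add_pairs[OF kernel_witness_large_d]) simp_all
  moreover have "\<exists>C b. cokernel_witness (2 + 2 * Suc k) d (expvec [3, d - 3]) (d - 1 + Suc k * (d - 1))
      (C :: (nat \<Rightarrow>\<^sub>0 nat) \<Rightarrow> 'k) b"
    using assms(2) by (intro cokernel_witness_add_pairs[OF cokernel_witness_alt_sign]) simp_all
  ultimately show ?thesis
    unfolding n i using fails_WLP_if_witnesses by blast
qed

lemma fails_WLP_d4: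
  assumes "n = 2 * m" "4 \<le> n"
  shows "fails_WLP_in_degree n (powers_and_monomial n 4 (expvec [1,1,1,1]) :: 'k::{idom, ring_char_0} mpoly set)
    (m * (4 - 1) - 1)"
proof -
  define k where "k = m - 2"
  have n: "4 + 2 * k = n" and i: "5 + k * (4 - 1) = m * (4 - 1) - 1" "6 + k * (4 - 1) = Suc (m * (4 - 1) - 1)"
    using assms by (simp_all add: k_def)
  have "keys (expvec [1,1,1,1]) \<subseteq> {..<4}"
    by (rule keys_expvec) simp
  then have "\<exists>f a. kernel_witness (4 + 2 * k) 4 (expvec [1,1,1,1]) (5 + k * (4 - 1)) (f :: 'k mpoly) a"
    by (intro kernel_witness_add_pairs[OF kernel_witness_d4]) simp_all
  moreover have "\<exists>C b. cokernel_witness (4 + 2 * k) 4 (expvec [1,1,1,1]) (6 + k * (4 - 1))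
      (C :: (nat \<Rightarrow>\<^sub>0 nat) \<Rightarrow> 'k) b"
    by (intro cokernel_witness_add_pairs[OF cokernel_witness_vandermonde4]) simp
  ultimately show ?thesis
    unfolding n i using fails_WLP_if_witnesses by blast
qed

lemma fails_WLP_d3:
  assumes "n = 2 * m" "6 \<le> n"
  shows "fails_WLP_in_degree n (powers_and_monomial n 3 (expvec [1,1,1]) :: 'k::{idom, ring_char_0} mpoly set)
    (m * (3 - 1) - 1)"
proof -
  define k where "k = m - 3"
  have n: "6 + 2 * k = n" and i: "5 + k * (3 - 1) = m * (3 - 1) - 1" "6 + k * (3 - 1) = Suc (m * (3 - 1) - 1)"
    using assms by (simp_all add: k_def)
  have e: "keys (expvec [1,1,1]) \<subseteq> {..<3}"
    by (rule keys_expvec) simp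
  have "kernel_witness (3 + 3) 3 (expvec [1,1,1]) (2 + 3) (cubic_quotient * vandermonde_poly 3 :: 'k mpoly)
      (expvec [0,0,2] + expvec [0,0,0,0,1,2])"
    using kernel_witness_tensor[OF kernel_witness_cubic_quotient kernel_block_vandermonde_poly e] .
  then have "\<exists>f a. kernel_witness (6 + 2 * k) 3 (expvec [1,1,1]) (5 + k * (3 - 1)) (f :: 'k mpoly) a"
    using e by (intro kernel_witness_add_pairs) auto
  moreover have "cokernel_witness (3 + 3) 3 (expvec [1,1,1]) (3 + 3)
      (\<lambda>x. of_int (vandermonde3 (lookup x 0) (lookup x 1) (lookup x 2))
         * of_int (vandermonde3 (lookup x 3) (lookup x (Suc 3)) (lookup x (Suc (Suc 3)))) :: 'k)
      (single 1 1 + single 2 2 + (single (Suc 3) 1 + single (Suc (Suc 3)) 2))"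
    using cokernel_witness_tensor[OF cokernel_witness_vandermonde3 cokernel_block_vandermonde3] .
  then have "\<exists>C b. cokernel_witness (6 + 2 * k) 3 (expvec [1,1,1]) (6 + k * (3 - 1))
      (C :: (nat \<Rightarrow>\<^sub>0 nat) \<Rightarrow> 'k) b"
    by (intro cokernel_witness_add_pairs) auto
  ultimately show ?thesis
    unfolding n i using fails_WLP_if_witnesses by blast
qed

theorem proposition5p6:
  fixes m n d :: nat
  assumes "n = 2 * m"
  shows "(d \<ge> 5 \<and> n \<ge> 4 \<longrightarrow>
           fails_WLP_in_degree n
             (insert (Var 0 ^ 3 * Var 1 ^ (d - 3)) (pure_powers n d) :: ('k::field_char_0) mpoly set)
             (m * (d - 1) - 1))
       \<and> (d = 4 \<and> n \<ge> 4 \<longrightarrow>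
           fails_WLP_in_degree n
             (insert (Var 0 * Var 1 * Var 2 * Var 3) (pure_powers n d) :: 'k mpoly set)
             (m * (d - 1) - 1))
       \<and> (d = 3 \<and> n \<ge> 6 \<longrightarrow>
           fails_WLP_in_degree n
             (insert (Var 0 * Var 1 * Var 2) (pure_powers n d) :: 'k mpoly set)
             (m * (d - 1) - 1))"
proof -
  have "insert (Var 0 ^ 3 * Var 1 ^ (d - 3)) (pure_powers n d) = (powers_and_monomial n d (expvec [3, d - 3]) :: 'k mpoly set)"
    "insert (Var 0 * Var 1 * Var 2 * Var 3) (pure_powers n d) = (powers_and_monomial n d (expvec [1,1,1,1]) :: 'k mpoly set)"
    "insert (Var 0 * Var 1 * Var 2) (pure_powers n d) = (powers_and_monomial n d (expvec [1,1,1]) :: 'k mpoly set)"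
    by (simp_all add: powers_and_monomial_def single_expvec_eq_prod lessThan_Suc eval_nat_numeral mult_ac)
  then show ?thesis
    using fails_WLP_large_d[OF assms] fails_WLP_d4[OF assms] fails_WLP_d3[OF assms] by auto
qed

end
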